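(* For every integer $n\geq 2$, the vector $$\chi=E^{1,2n-1}_{(-1)}E^{1,2n}_{(-1)}\ket{0}$$ is a singular vector of $V^1(\mathfrak{psl}_{n|n})$, i.e. it is annihilated by every element of $\widehat{\mathfrak{n}}_+$, and the $\widehat{\mathfrak{psl}}_{n|n}$-submodule $U=\langle\chi\rangle$ of $V^1(\mathfrak{psl}_{n|n})$ generated by $\chi$ is a proper non-zero submodule.
   Context: $\mathfrak{psl}_{n|n}$ is the Lie superalgebra of supertraceless $(2n)\times(2n)$ supermatrices acting on $\mathbb{C}^{n|n}$ modulo the identity; $E^{i,j}$ denotes the elementary supermatrix with $1$ in entry $(i,j)$ (odd iff exactly one of $i,j$ is $>n$), and $H^{i,j}=E^{i,i}-E^{j,j}$. The triangular decomposition $\mathfrak{psl}_{n|n}=\mathfrak{n}_+\oplus\mathfrak{h}\oplus\mathfrak{n}_-$ is the one with $\mathfrak{n}_+$ spanned by $E^{i,j}$, $i<j$ (upper triangular), $\mathfrak{n}_-$ by $E^{i,j}$, $i>j$, and $\mathfrak{h}$ the diagonal part. $V^1(\mathfrak{psl}_{n|n})$ is the universal affine vertex superalgebra at level $1$, i.e. the vacuum module induced from the trivial one-dimensional module of $\mathfrak{psl}_{n|n}[[t]]\oplus\mathbb{C}K$ with $K$ acting by $1$, with fields $X(z)=\sum_m X_{(m)}z^{-m-1}$ satisfying $[X_{(m)},Y_{(l)}]=[X,Y]_{(m+l)}+m\delta_{m+l,0}\,\mathrm{str}(XY)$. Here $\widehat{\mathfrak{n}}_+=\mathfrak{n}_+\oplus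 t\,\mathfrak{psl}_{n|n}[[t]]$, so that $X\otimes t^m$ acts as $X_{(m)}$. A vector is singular if it is annihilated by $\widehat{\mathfrak{n}}_+$. *)

theory Defs
  imports Complex_Main
begin

text \<open>A (2n)x(2n) supermatrix is a function nat => nat => complex supported on
  indices {1..2n} x {1..2n}; indices 1..n are even, n+1..2n are odd.\<close>

type_synonym smat = "nat \<Rightarrow> nat \<Rightarrow> complex"

definition is_mat :: "nat \<Rightarrow> smat \<Rightarrow> bool" where
  "is_mat n X \<longleftrightarrow> (\<forall>i j. X i j \<noteq> 0 \<longrightarrow> i \<in> {1..2*n} \<and> j \<in> {1..2*n})"

definition Emat :: "nat \<Rightarrow> nat \<Rightarrow> smat" where
  "Emat i j = (\<lambda>a b. if a = i \<and> b = j then 1 else 0)"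

definition idm :: "nat \<Rightarrow> smat" where
  "idm n = (\<lambda>i j. if i = j \<and> i \<in> {1..2*n} then 1 else 0)"

definition zmat :: smat where
  "zmat = (\<lambda>i j. 0)"

definition odd_entry :: "nat \<Rightarrow> nat \<Rightarrow> nat \<Rightarrow> bool" where
  "odd_entry n i j \<longleftrightarrow> ((n < i) \<noteq> (n < j))"

definition even_part :: "nat \<Rightarrow> smat \<Rightarrow> smat" where
  "even_part n X = (\<lambda>i j. if odd_entry n i j then 0 else X i j)"

definition odd_part :: "nat \<Rightarrow> smat \<Rightarrow> smat" where
  "odd_part n X = (\<lambda>i j. if odd_entry n i j then X i j else 0)"

definition mmul :: "nat \<Rightarrow> smat \<Rightarrow> smat \<Rightarrow> smat" where
  "mmul n X Y = (\<lambda>i j. \<Sum>k\<in>{1..2*n}. X i k * Y k j)"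

definition str :: "nat \<Rightarrow> smat \<Rightarrow> complex" where
  "str n X = (\<Sum>i\<in>{1..n}. X i i) - (\<Sum>i\<in>{n+1..2*n}. X i i)"

text \<open>supertraceless matrices (elements of sl_{n|n}; psl_{n|n} is sl_{n|n} modulo idm n)\<close>
definition sl :: "nat \<Rightarrow> smat \<Rightarrow> bool" where
  "sl n X \<longleftrightarrow> is_mat n X \<and> str n X = 0"

definition valid :: "nat \<Rightarrow> smat \<Rightarrow> bool" where
  "valid n X \<longleftrightarrow> sl n X \<and> (even_part n X = X \<or> odd_part n X = X)"

definition is_odd_mat :: "nat \<Rightarrow> smat \<Rightarrow> bool" where
  "is_odd_mat n X \<longleftrightarrow> odd_part n X = X"

definition sgn :: "nat \<Rightarrow> smat \<Rightarrow> smat \<Rightarrow> complex" where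
  "sgn n X Y = (if is_odd_mat n X \<and> is_odd_mat n Y then -1 else 1)"

definition sbr :: "nat \<Rightarrow> smat \<Rightarrow> smat \<Rightarrow> smat" where
  "sbr n X Y = (\<lambda>i j. mmul n X Y i j - sgn n X Y * mmul n Y X i j)"

definition strictly_upper :: "nat \<Rightarrow> smat \<Rightarrow> bool" where
  "strictly_upper n X \<longleftrightarrow> is_mat n X \<and> (\<forall>i j. X i j \<noteq> 0 \<longrightarrow> i < j)"

text \<open>A generator (X, m) with X homogeneous supertraceless stands for X (x) t^m,
  acting as the mode X_(m). Elements are finitely supported complex
  combinations of words.\<close>

type_synonym word = "(smat \<times> int) list"
type_synonym falg = "word \<Rightarrow> complex"

definition validw :: "nat \<Rightarrow> word \<Rightarrow> bool" where
  "validw n u \<longleftrightarrow> (\<forall>(X, m) \<in> set u. valid n X)"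

definition inA :: "nat \<Rightarrow> falg \<Rightarrow> bool" where
  "inA n a \<longleftrightarrow> finite {u. a u \<noteq> 0} \<and> (\<forall>u. a u \<noteq> 0 \<longrightarrow> validw n u)"

definition mono :: "word \<Rightarrow> falg" where
  "mono w = (\<lambda>u. if u = w then 1 else 0)"

definition fmul :: "falg \<Rightarrow> falg \<Rightarrow> falg" where
  "fmul a b = (\<lambda>u. \<Sum>(v, w) \<in> {(v, w). v @ w = u}. a v * b w)"

definition fadd :: "falg \<Rightarrow> falg \<Rightarrow> falg" where
  "fadd a b = (\<lambda>u. a u + b u)"

definition fsub :: "falg \<Rightarrow> falg \<Rightarrow> falg" where
  "fsub a b = (\<lambda>u. a u - b u)"

definition fscale :: "complex \<Rightarrow> falg \<Rightarrow> falg" where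
  "fscale c a = (\<lambda>u. c * a u)"

text \<open>Defining relations of U(psl_{n|n}^) with K = 1:
  linearity in X, the identity matrix is zero (quotient sl -> psl), and
  [X_(m), Y_(l)] = [X,Y]_(m+l) + m delta_{m+l,0} str(XY).\<close>

inductive_set rels :: "nat \<Rightarrow> falg set" for n where
  lin: "valid n X \<Longrightarrow> valid n Y \<Longrightarrow> is_odd_mat n X = is_odd_mat n Y \<Longrightarrow>
        fsub (fsub (mono [((\<lambda>i j. a * X i j + b * Y i j), m)])
                   (fscale a (mono [(X, m)])))
             (fscale b (mono [(Y, m)])) \<in> rels n"
| cent: "mono [(idm n, m)] \<in> rels n"
| brk: "valid n X \<Longrightarrow> valid n Y \<Longrightarrow>
        fsub (fsub (fsub (mono [(X, m), (Y, l)]) (fscale (sgn n X Y) (mono [(Y, l), (X, m)])))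
                   (mono [(sbr n X Y, m + l)]))
             (fscale (if m + l = 0 then of_int m * str n (mmul n X Y) else 0) (mono [])) \<in> rels n"

text \<open>The left ideal J with V^1(psl_{n|n}) = A / J: generated by the two-sided
  relations and by the left multiples of X_(m), m >= 0 (the vacuum is
  annihilated by psl[t]).\<close>

inductive_set Jid :: "nat \<Rightarrow> falg set" for n where
  zero: "(\<lambda>_. 0) \<in> Jid n"
| add: "a \<in> Jid n \<Longrightarrow> b \<in> Jid n \<Longrightarrow> fadd a b \<in> Jid n"
| scale: "a \<in> Jid n \<Longrightarrow> fscale c a \<in> Jid n"
| rel: "r \<in> rels n \<Longrightarrow> validw n u \<Longrightarrow> validw n w \<Longrightarrow>
        fmul (mono u) (fmul r (mono w)) \<in> Jid n"
| ann: "validw n u \<Longrightarrow> valid n X \<Longrightarrow> 0 \<le> m \<Longrightarrow>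
        fmul (mono u) (mono [(X, m)]) \<in> Jid n"

definition mode :: "nat \<Rightarrow> smat \<Rightarrow> int \<Rightarrow> falg" where
  "mode n X m = fadd (mono [(even_part n X, m)]) (mono [(odd_part n X, m)])"

end

(*
  Singularity is a computation modulo Jid n: moving Y(m) past E1(-1) E2(-1) leaves terms ending in
  a nonnegative mode, vanishing brackets (for m = 0 because Y is strictly upper triangular), the
  square of the odd mode E2(-1), and for m = 1 central terms that cancel brackets because Y is
  homogeneous.

  Non-membership in Jid n is detected by linear functionals on words that vanish on Jid n.  Given a
  right action of the negative modes on a space of states and a linear read-out, eval_word
  evaluates a word by moving its nonnegative modes to the right end, where they kill the vacuum.
  The Jacobi identity and the cocycle property of the central term m \<delta>(m+l,0) str(XY) make this
  consistent with every defining relation.  Letting E1(-1), E2(-1) act on the exterior algebra they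
  span gives a functional that is 1 on chi, so U is nonzero.  Letting all negative modes act by
  zero gives the vacuum coefficient, which is 1 on |0> but 0 on every a chi: negative modes kill
  it, a zero mode never produces a vacuum component, and a positive mode can be commuted onto chi.
  So |0> is not in U.
*)

theory Submission
  imports Defs
begin

section \<open>Supermatrices\<close>

definition mat_comb :: "complex \<Rightarrow> smat \<Rightarrow> complex \<Rightarrow> smat \<Rightarrow> smat" where
  "mat_comb a X b Y = (\<lambda>i j. a * X i j + b * Y i j)"

text \<open>\<open>is_odd_mat\<close> counts \<open>zmat\<close> as odd, so \<open>sgn\<close> treats it as odd; \<open>has_parity n p zmat\<close> holds
  for both \<open>p\<close>.\<close>

definition has_parity :: "nat \<Rightarrow> bool \<Rightarrow> smat \<Rightarrow> bool" where
  "has_parity n p X \<longleftrightarrow> (\<forall>i j. X i j \<noteq> 0 \<longrightarrow> odd_entry n i j = p)"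

definition parity_sign :: "bool \<Rightarrow> bool \<Rightarrow> complex" where
  "parity_sign p q = (if p \<and> q then -1 else 1)"

definition twisted_comm :: "nat \<Rightarrow> complex \<Rightarrow> smat \<Rightarrow> smat \<Rightarrow> smat" where
  "twisted_comm n s A B = mat_comb 1 (mmul n A B) (- s) (mmul n B A)"

lemma sgn_eq_parity_sign: "sgn n X Y = parity_sign (is_odd_mat n X) (is_odd_mat n Y)"
  by (simp add: sgn_def parity_sign_def)

lemma sbr_eq_twisted_comm: "sbr n X Y = twisted_comm n (sgn n X Y) X Y"
  by (simp add: sbr_def twisted_comm_def mat_comb_def)

lemma sgn_commute: "sgn n X Y = sgn n Y X"
  by (auto simp: sgn_def)

lemma sgn_square: "sgn n X Y * sgn n X Y = 1"
  by (simp add: sgn_def)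

lemma parity_sign_xor_right: "parity_sign p (q \<noteq> r) = parity_sign p q * parity_sign p r"
  by (auto simp: parity_sign_def)

lemma parity_sign_xor_left: "parity_sign (q \<noteq> r) p = parity_sign q p * parity_sign r p"
  by (auto simp: parity_sign_def)

lemma mat_comb_zero: "mat_comb 0 X 0 Y = zmat"
  by (simp add: mat_comb_def zmat_def)

lemma mmul_zmat_left: "mmul n zmat B = zmat" and mmul_zmat_right: "mmul n A zmat = zmat"
  by (simp_all add: mmul_def zmat_def)

lemma sbr_zmat_left: "sbr n zmat B = zmat" and sbr_zmat_right: "sbr n A zmat = zmat"
  by (simp_all add: sbr_def mmul_zmat_left mmul_zmat_right) (simp_all add: zmat_def)

lemma str_zmat: "str n zmat = 0"
  by (simp add: str_def zmat_def)

lemma is_odd_mat_iff: "is_odd_mat n X \<longleftrightarrow> (\<forall>i j. \<not> odd_entry n i j \<longrightarrow> X i j = 0)"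
  unfolding is_odd_mat_def odd_part_def fun_eq_iff by auto

lemma even_part_eq_iff: "even_part n X = X \<longleftrightarrow> (\<forall>i j. odd_entry n i j \<longrightarrow> X i j = 0)"
  unfolding even_part_def fun_eq_iff by auto

lemma has_parity_valid: "valid n X \<Longrightarrow> has_parity n (is_odd_mat n X) X"
  unfolding valid_def has_parity_def even_part_eq_iff is_odd_mat_def[symmetric] is_odd_mat_iff by auto

lemma is_odd_mat_eq_parity: "has_parity n p X \<Longrightarrow> X \<noteq> zmat \<Longrightarrow> is_odd_mat n X = p"
  unfolding has_parity_def is_odd_mat_iff zmat_def fun_eq_iff by (auto; metis)

lemma has_parity_homogeneous: "has_parity n p M \<Longrightarrow> even_part n M = M \<or> odd_part n M = M"
  by (auto simp: has_parity_def even_part_def odd_part_def fun_eq_iff)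

lemma has_parity_mat_comb: "has_parity n p X \<Longrightarrow> has_parity n p Y \<Longrightarrow> has_parity n p (mat_comb a X b Y)"
  unfolding has_parity_def mat_comb_def by (metis add.right_neutral mult_zero_right)

lemma has_parity_mmul:
  assumes "has_parity n p X" "has_parity n q Y"
  shows "has_parity n (p \<noteq> q) (mmul n X Y)"
  unfolding has_parity_def
proof (intro allI impI)
  fix i j assume "mmul n X Y i j \<noteq> 0"
  then obtain k where "X i k * Y k j \<noteq> 0"
    unfolding mmul_def by (meson sum.not_neutral_contains_not_neutral)
  then have "odd_entry n i k = p" "odd_entry n k j = q"
    using assms unfolding has_parity_def by auto
  then show "odd_entry n i j = (p \<noteq> q)" by (auto simp: odd_entry_def)
qed

lemma has_parity_twisted_comm:
  assumes "has_parity n p X" "has_parity n q Y"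
  shows "has_parity n (p \<noteq> q) (twisted_comm n s X Y)"
proof -
  have "has_parity n (p \<noteq> q) (mmul n Y X)"
    using has_parity_mmul[OF assms(2,1)] by (simp add: eq_commute)
  then show ?thesis
    unfolding twisted_comm_def by (rule has_parity_mat_comb[OF has_parity_mmul[OF assms]])
qed

lemma has_parity_sbr:
  "valid n X \<Longrightarrow> valid n Y \<Longrightarrow> has_parity n (is_odd_mat n X \<noteq> is_odd_mat n Y) (sbr n X Y)"
  unfolding sbr_eq_twisted_comm by (intro has_parity_twisted_comm has_parity_valid)

lemma twisted_comm_zmat_left: "twisted_comm n s zmat B = zmat"
  and twisted_comm_zmat_right: "twisted_comm n s A zmat = zmat"
  by (simp_all add: twisted_comm_def mmul_zmat_left mmul_zmat_right) (simp_all add: mat_comb_def zmat_def)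

lemma sbr_eq_twisted_comm_parity_right:
  assumes "has_parity n q B"
  shows "sbr n A B = twisted_comm n (parity_sign (is_odd_mat n A) q) A B"
proof (cases "B = zmat")
  case True then show ?thesis by (simp add: sbr_zmat_right twisted_comm_zmat_right)
next
  case False then show ?thesis
    using assms by (simp add: sbr_eq_twisted_comm sgn_eq_parity_sign is_odd_mat_eq_parity)
qed

lemma sbr_eq_twisted_comm_parity_left:
  assumes "has_parity n p A"
  shows "sbr n A B = twisted_comm n (parity_sign p (is_odd_mat n B)) A B"
proof (cases "A = zmat")
  case True then show ?thesis by (simp add: sbr_zmat_left twisted_comm_zmat_left)
next
  case False then show ?thesis
    using assms by (simp add: sbr_eq_twisted_comm sgn_eq_parity_sign is_odd_mat_eq_parity)
qed

lemma has_parity_sbr_left: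
  assumes "has_parity n p X" "valid n V"
  shows "has_parity n (p \<noteq> is_odd_mat n V) (sbr n X V)"
  unfolding sbr_eq_twisted_comm_parity_left[OF assms(1)]
  by (rule has_parity_twisted_comm[OF assms(1) has_parity_valid[OF assms(2)]])

lemma has_parity_sbr_right:
  assumes "has_parity n p X" "valid n V"
  shows "has_parity n (is_odd_mat n V \<noteq> p) (sbr n V X)"
  unfolding sbr_eq_twisted_comm_parity_right[OF assms(1)]
  by (rule has_parity_twisted_comm[OF has_parity_valid[OF assms(2)] assms(1)])

lemma mmul_mat_comb_left: "mmul n (mat_comb a A b B) C = mat_comb a (mmul n A C) b (mmul n B C)"
  and mmul_mat_comb_right: "mmul n C (mat_comb a A b B) = mat_comb a (mmul n C A) b (mmul n C B)"
  by (simp_all add: mmul_def mat_comb_def sum.distrib sum_distrib_left algebra_simps)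

lemma mmul_assoc: "mmul n (mmul n A B) C = mmul n A (mmul n B C)"
proof -
  have "(\<Sum>k\<in>{1..2*n}. (\<Sum>l\<in>{1..2*n}. A i l * B l k) * C k j)
      = (\<Sum>l\<in>{1..2*n}. A i l * (\<Sum>k\<in>{1..2*n}. B l k * C k j))" for i j
    by (simp add: sum_distrib_left sum_distrib_right mult.assoc) (rule sum.swap)
  then show ?thesis by (simp add: mmul_def)
qed

lemma twisted_comm_mat_comb_left:
    "twisted_comm n s (mat_comb a A b B) C = mat_comb a (twisted_comm n s A C) b (twisted_comm n s B C)"
  and twisted_comm_mat_comb_right:
    "twisted_comm n s C (mat_comb a A b B) = mat_comb a (twisted_comm n s C A) b (twisted_comm n s C B)"
  by (simp_all add: twisted_comm_def mmul_mat_comb_left mmul_mat_comb_right)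
     (simp_all add: mat_comb_def fun_eq_iff algebra_simps)

lemma sbr_mat_comb_left:
  assumes "has_parity n p X" "has_parity n p Y"
  shows "sbr n (mat_comb a X b Y) V = mat_comb a (sbr n X V) b (sbr n Y V)"
  using assms has_parity_mat_comb[OF assms]
  by (simp add: sbr_eq_twisted_comm_parity_left[of n p] twisted_comm_mat_comb_left)

lemma sbr_mat_comb_right:
  assumes "has_parity n p X" "has_parity n p Y"
  shows "sbr n V (mat_comb a X b Y) = mat_comb a (sbr n V X) b (sbr n V Y)"
  using assms has_parity_mat_comb[OF assms]
  by (simp add: sbr_eq_twisted_comm_parity_right[of n p] twisted_comm_mat_comb_right)

lemma sbr_antisym: "sbr n Y X = mat_comb (- sgn n X Y) (sbr n X Y) 0 (sbr n X Y)"
proof -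
  have "sgn n X Y = 1 \<or> sgn n X Y = -1" by (simp add: sgn_def)
  then show ?thesis
    unfolding sbr_def mat_comb_def sgn_commute[of n Y X] by (elim disjE) (simp_all add: add.commute)
qed

lemma twisted_comm_jacobi:
  "twisted_comm n (parity_sign z (x \<noteq> y)) Z (twisted_comm n (parity_sign x y) X Y) =
    mat_comb 1 (twisted_comm n (parity_sign (z \<noteq> x) y) (twisted_comm n (parity_sign z x) Z X) Y)
      (parity_sign z x) (twisted_comm n (parity_sign x (z \<noteq> y)) X (twisted_comm n (parity_sign z y) Z Y))"
  unfolding twisted_comm_def mmul_mat_comb_left mmul_mat_comb_right mmul_assoc
  by (cases z; cases x; cases y) (simp_all add: mat_comb_def parity_sign_def fun_eq_iff algebra_simps)

lemma sbr_jacobi: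
  assumes "valid n X" "valid n Y" "valid n Z"
  shows "sbr n Z (sbr n X Y) = mat_comb 1 (sbr n (sbr n Z X) Y) (sgn n Z X) (sbr n X (sbr n Z Y))"
proof -
  let ?x = "is_odd_mat n X" and ?y = "is_odd_mat n Y" and ?z = "is_odd_mat n Z"
  have "sbr n Z (sbr n X Y) = twisted_comm n (parity_sign ?z (?x \<noteq> ?y)) Z (twisted_comm n (parity_sign ?x ?y) X Y)"
    using sbr_eq_twisted_comm_parity_right[OF has_parity_sbr[OF assms(1,2)], of Z]
    by (simp add: sbr_eq_twisted_comm sgn_eq_parity_sign)
  moreover have "sbr n (sbr n Z X) Y = twisted_comm n (parity_sign (?z \<noteq> ?x) ?y) (twisted_comm n (parity_sign ?z ?x) Z X) Y"
    using sbr_eq_twisted_comm_parity_left[OF has_parity_sbr[OF assms(3,1)], of Y]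
    by (simp add: sbr_eq_twisted_comm sgn_eq_parity_sign)
  moreover have "sbr n X (sbr n Z Y) = twisted_comm n (parity_sign ?x (?z \<noteq> ?y)) X (twisted_comm n (parity_sign ?z ?y) Z Y)"
    using sbr_eq_twisted_comm_parity_right[OF has_parity_sbr[OF assms(3,2)], of X]
    by (simp add: sbr_eq_twisted_comm sgn_eq_parity_sign)
  ultimately show ?thesis using twisted_comm_jacobi[of n ?z ?x ?y Z X Y] by (simp add: sgn_eq_parity_sign)
qed

definition super_sign :: "nat \<Rightarrow> nat \<Rightarrow> complex" where
  "super_sign n i = (if i \<le> n then 1 else -1)"

lemma str_eq_super_sign_sum: "str n M = (\<Sum>i\<in>{1..2*n}. super_sign n i * M i i)"
proof -
  have "{1..2*n} = {1..n} \<union> {n+1..2*n}" by auto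
  then have "(\<Sum>i\<in>{1..2*n}. super_sign n i * M i i)
      = (\<Sum>i\<in>{1..n}. super_sign n i * M i i) + (\<Sum>i\<in>{n+1..2*n}. super_sign n i * M i i)"
    by (simp add: sum.union_disjoint)
  also have "\<dots> = (\<Sum>i\<in>{1..n}. M i i) - (\<Sum>i\<in>{n+1..2*n}. M i i)"
    by (simp add: super_sign_def sum_negf[symmetric])
  finally show ?thesis by (simp add: str_def)
qed

lemma str_mat_comb: "str n (mat_comb a A b B) = a * str n A + b * str n B"
  by (simp add: str_def mat_comb_def sum.distrib sum_distrib_left algebra_simps)

lemma str_mmul_commute:
  assumes "has_parity n p X" "has_parity n q Y"
  shows "str n (mmul n X Y) = parity_sign p q * str n (mmul n Y X)"
proof -
  have entry: "super_sign n i * (X i k * Y k i) = parity_sign p q * (super_sign n k * (Y k i * X i k))" for i k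
  proof (cases "X i k = 0 \<or> Y k i = 0")
    case False
    then have "odd_entry n i k = p" "odd_entry n k i = q" using assms unfolding has_parity_def by auto
    then show ?thesis by (cases p) (auto simp: parity_sign_def super_sign_def odd_entry_def)
  qed auto
  have "str n (mmul n X Y) = (\<Sum>i\<in>{1..2*n}. \<Sum>k\<in>{1..2*n}. super_sign n i * (X i k * Y k i))"
    by (simp add: str_eq_super_sign_sum mmul_def sum_distrib_left)
  also have "\<dots> = parity_sign p q * (\<Sum>k\<in>{1..2*n}. \<Sum>i\<in>{1..2*n}. super_sign n k * (Y k i * X i k))"
    by (subst sum.swap) (simp add: entry sum_distrib_left)
  also have "\<dots> = parity_sign p q * str n (mmul n Y X)"
    by (simp add: str_eq_super_sign_sum mmul_def sum_distrib_left)
  finally show ?thesis .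
qed

lemma str_mmul_mixed_parity:
  assumes "has_parity n p X" "has_parity n q Y" "p \<noteq> q"
  shows "str n (mmul n X Y) = 0"
proof -
  have "mmul n X Y i i = 0" for i
    using has_parity_mmul[OF assms(1,2)] assms(3) unfolding has_parity_def odd_entry_def by auto
  then show ?thesis by (simp add: str_def)
qed

lemma valid_is_mat: "valid n X \<Longrightarrow> is_mat n X"
  by (simp add: valid_def sl_def)

lemma is_mat_mmul: "is_mat n A \<Longrightarrow> is_mat n B \<Longrightarrow> is_mat n (mmul n A B)"
  unfolding is_mat_def mmul_def by (metis (no_types, lifting) mult_eq_0_iff sum.neutral)

lemma is_mat_mat_comb: "is_mat n A \<Longrightarrow> is_mat n B \<Longrightarrow> is_mat n (mat_comb a A b B)"
  unfolding is_mat_def mat_comb_def by (metis add.right_neutral mult_zero_right)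

lemma validI: "is_mat n M \<Longrightarrow> str n M = 0 \<Longrightarrow> has_parity n p M \<Longrightarrow> valid n M"
  unfolding valid_def sl_def using has_parity_homogeneous by blast

lemma valid_zmat: "valid n zmat"
  by (rule validI[of n _ False]) (auto simp: is_mat_def str_def has_parity_def zmat_def)

lemma str_mmul_commute_valid:
  assumes "valid n X" "valid n Y"
  shows "str n (mmul n X Y) = sgn n X Y * str n (mmul n Y X)"
  using str_mmul_commute[OF has_parity_valid[OF assms(1)] has_parity_valid[OF assms(2)]]
  by (simp add: sgn_eq_parity_sign)

lemma valid_sbr:
  assumes "valid n X" "valid n Y" shows "valid n (sbr n X Y)"
proof (rule validI)
  show "is_mat n (sbr n X Y)" using assms
    by (simp add: sbr_eq_twisted_comm twisted_comm_def is_mat_mat_comb is_mat_mmul valid_is_mat)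
  show "str n (sbr n X Y) = 0" using str_mmul_commute_valid[OF assms]
    by (simp add: sbr_eq_twisted_comm twisted_comm_def str_mat_comb)
  show "has_parity n (is_odd_mat n X \<noteq> is_odd_mat n Y) (sbr n X Y)" using has_parity_sbr assms .
qed

lemma same_parity_if_str_mmul_nonzero:
  assumes "valid n X" "valid n Y" "str n (mmul n X Y) \<noteq> 0"
  shows "is_odd_mat n X = is_odd_mat n Y"
  using str_mmul_mixed_parity[OF has_parity_valid[OF assms(1)] has_parity_valid[OF assms(2)]] assms(3)
  by blast

lemma sgn_sbr_right:
  assumes "valid n X" "valid n Y" "sbr n X Y \<noteq> zmat"
  shows "sgn n Z (sbr n X Y) = sgn n Z X * sgn n Z Y"
  unfolding sgn_eq_parity_sign is_odd_mat_eq_parity[OF has_parity_sbr[OF assms(1,2)] assms(3)]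
  by (rule parity_sign_xor_right)

lemma sgn_sbr_left:
  assumes "valid n X" "valid n Y" "sbr n X Y \<noteq> zmat"
  shows "sgn n (sbr n X Y) Z = sgn n X Z * sgn n Y Z"
  unfolding sgn_eq_parity_sign is_odd_mat_eq_parity[OF has_parity_sbr[OF assms(1,2)] assms(3)]
  by (rule parity_sign_xor_left)

lemma str_sbr_invariant:
  assumes "valid n X" "valid n Y" "valid n Z"
  shows "str n (mmul n (sbr n Z X) Y) = str n (mmul n Z (sbr n X Y))"
proof -
  let ?x = "is_odd_mat n X" and ?y = "is_odd_mat n Y" and ?z = "is_odd_mat n Z"
  have cX: "has_parity n ?x X" and cY: "has_parity n ?y Y" and cZ: "has_parity n ?z Z"
    using assms has_parity_valid by auto
  have cyclic: "str n (mmul n X (mmul n Z Y)) = parity_sign ?x (?z \<noteq> ?y) * str n (mmul n Z (mmul n Y X))"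
    using str_mmul_commute[OF cX has_parity_mmul[OF cZ cY]] by (simp add: mmul_assoc)
  have "str n (mmul n (sbr n Z X) Y)
      = str n (mmul n Z (mmul n X Y)) - parity_sign ?z ?x * str n (mmul n X (mmul n Z Y))"
    by (simp add: sbr_eq_twisted_comm twisted_comm_def mmul_mat_comb_left str_mat_comb mmul_assoc sgn_eq_parity_sign)
  also have "\<dots> = str n (mmul n Z (mmul n X Y)) - parity_sign ?x ?y * str n (mmul n Z (mmul n Y X))"
    unfolding cyclic by (cases ?x; cases ?y; cases ?z; simp add: parity_sign_def)
  also have "\<dots> = str n (mmul n Z (sbr n X Y))"
    by (simp add: sbr_eq_twisted_comm twisted_comm_def mmul_mat_comb_right str_mat_comb sgn_eq_parity_sign)
  finally show ?thesis .
qed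

lemma mmul_idm_left: "is_mat n V \<Longrightarrow> mmul n (idm n) V = V"
proof (intro ext)
  fix i j assume "is_mat n V"
  have "mmul n (idm n) V i j = (\<Sum>k\<in>{1..2*n}. if k = i then V i j else 0)"
    unfolding mmul_def idm_def by (rule sum.cong) auto
  also have "\<dots> = V i j" using \<open>is_mat n V\<close> unfolding is_mat_def by (auto simp: sum.delta')
  finally show "mmul n (idm n) V i j = V i j" .
qed

lemma mmul_idm_right: "is_mat n V \<Longrightarrow> mmul n V (idm n) = V"
proof (intro ext)
  fix i j assume "is_mat n V"
  have "mmul n V (idm n) i j = (\<Sum>k\<in>{1..2*n}. if k = j then V i j else 0)"
    unfolding mmul_def idm_def by (rule sum.cong) auto
  also have "\<dots> = V i j" using \<open>is_mat n V\<close> unfolding is_mat_def by (auto simp: sum.delta')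
  finally show "mmul n V (idm n) i j = V i j" .
qed

lemma not_is_odd_mat_idm: "0 < n \<Longrightarrow> \<not> is_odd_mat n (idm n)"
  unfolding is_odd_mat_iff by (auto simp: idm_def odd_entry_def intro!: exI[of _ 1])

lemma sbr_idm_left: "0 < n \<Longrightarrow> valid n V \<Longrightarrow> sbr n (idm n) V = zmat"
  and sbr_idm_right: "0 < n \<Longrightarrow> valid n V \<Longrightarrow> sbr n V (idm n) = zmat"
  by (simp_all add: sbr_def sgn_def not_is_odd_mat_idm mmul_idm_left mmul_idm_right valid_is_mat zmat_def)

lemma str_mmul_idm_left: "valid n V \<Longrightarrow> str n (mmul n (idm n) V) = 0"
  and str_mmul_idm_right: "valid n V \<Longrightarrow> str n (mmul n V (idm n)) = 0"
  by (simp_all add: mmul_idm_left mmul_idm_right valid_is_mat) (simp_all add: valid_def sl_def)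

section \<open>Words and the commutation expansion\<close>

type_synonym letter = "smat \<times> int"

type_synonym state = "nat \<Rightarrow> complex"

lemma validw_take: "validw n w \<Longrightarrow> validw n (take k w)"
  and validw_drop: "validw n w \<Longrightarrow> validw n (drop k w)"
  by (auto simp: validw_def dest: in_set_takeD in_set_dropD)

lemma validw_nth: "validw n w \<Longrightarrow> k < length w \<Longrightarrow> valid n (fst (w ! k))"
  unfolding validw_def by (metis nth_mem prod.case_eq_if)

lemma validw_Nil [simp]: "validw n []"
  and validw_Cons [simp]: "validw n (x # w) \<longleftrightarrow> valid n (fst x) \<and> validw n w"
  and validw_append [simp]: "validw n (u @ w) \<longleftrightarrow> validw n u \<and> validw n w"
  by (cases x) (auto simp: validw_def)

definition lbracket :: "nat \<Rightarrow> letter \<Rightarrow> letter \<Rightarrow> letter" where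
  "lbracket n x y = (sbr n (fst x) (fst y), snd x + snd y)"

definition lcentral :: "nat \<Rightarrow> letter \<Rightarrow> letter \<Rightarrow> complex" where
  "lcentral n x y =
     (if snd x + snd y = 0 then of_int (snd x) * str n (mmul n (fst x) (fst y)) else 0)"

definition lsign :: "nat \<Rightarrow> letter \<Rightarrow> letter \<Rightarrow> complex" where
  "lsign n x y = sgn n (fst x) (fst y)"

definition word_sign :: "nat \<Rightarrow> letter \<Rightarrow> word \<Rightarrow> complex" where
  "word_sign n x u = (\<Prod>v\<leftarrow>u. lsign n x v)"

lemma lsign_commute: "lsign n x y = lsign n y x"
  and lsign_square: "lsign n x y * lsign n x y = 1"
  by (simp_all add: lsign_def sgn_commute sgn_square)

lemma valid_lbracket: "valid n (fst x) \<Longrightarrow> valid n (fst y) \<Longrightarrow> valid n (fst (lbracket n x y))"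
  by (simp add: lbracket_def valid_sbr)

lemma lbracket_zmat: "lbracket n (zmat, m) v = (zmat, m + snd v)"
  by (simp add: lbracket_def sbr_zmat_left)

lemma lcentral_zmat: "lcentral n (zmat, m) v = 0"
  by (simp add: lcentral_def mmul_zmat_left str_zmat)

lemma lcentral_mat_comb_left:
    "lcentral n (mat_comb a X b Y, m) v = a * lcentral n (X, m) v + b * lcentral n (Y, m) v"
  and lcentral_mat_comb_right:
    "lcentral n v (mat_comb a X b Y, m) = a * lcentral n v (X, m) + b * lcentral n v (Y, m)"
  by (simp_all add: lcentral_def mmul_mat_comb_left mmul_mat_comb_right str_mat_comb algebra_simps)

lemma lcentral_nonneg: "0 \<le> snd x \<Longrightarrow> 0 \<le> snd y \<Longrightarrow> lcentral n x y = 0"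
  by (simp add: lcentral_def)

lemma lsign_mult_parity_right:
  assumes "has_parity n p M" "M = zmat \<Longrightarrow> T = 0"
  shows "lsign n v (M, m) * T = parity_sign (is_odd_mat n (fst v)) p * T"
  using assms is_odd_mat_eq_parity[OF assms(1)]
  by (cases "M = zmat") (auto simp: lsign_def sgn_eq_parity_sign)

lemma word_sign_mult_parity:
  assumes "has_parity n p M" "M = zmat \<Longrightarrow> T = 0"
  shows "word_sign n (M, m) u * T = (\<Prod>v\<leftarrow>u. parity_sign p (is_odd_mat n (fst v))) * T"
  using assms is_odd_mat_eq_parity[OF assms(1)]
  by (cases "M = zmat") (auto simp: word_sign_def lsign_def sgn_eq_parity_sign)

lemma lcentral_same_parity:
  assumes "valid n (fst a)" "valid n (fst b)"
  shows "lcentral n a b * (lsign n c a - lsign n c b) = 0"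
proof (cases "lcentral n a b = 0")
  case False
  then have "str n (mmul n (fst a) (fst b)) \<noteq> 0" by (auto simp: lcentral_def split: if_splits)
  then show ?thesis
    using same_parity_if_str_mmul_nonzero[OF assms] by (simp add: lsign_def sgn_eq_parity_sign)
qed simp

lemma lcentral_antisym:
  assumes "valid n (fst a)" "valid n (fst b)"
  shows "lcentral n a b = - lsign n a b * lcentral n b a"
proof (cases "snd a + snd b = 0")
  case True
  then have "snd b = - snd a" by simp
  then show ?thesis using str_mmul_commute_valid[OF assms]
    by (simp add: lcentral_def lsign_def sgn_commute[of n "fst b"])
qed (simp add: lcentral_def add.commute)

lemma lcentral_cocycle:
  assumes "valid n (fst z)" "valid n (fst x)" "valid n (fst y)"
  shows "lcentral n (lbracket n z x) y + lsign n z x * lcentral n x (lbracket n z y) = lcentral n z (lbracket n x y)"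
proof -
  obtain Z a X b Y c where zxy: "z = (Z, a)" "x = (X, b)" "y = (Y, c)" by (metis prod.exhaust)
  have vZ: "valid n Z" and vX: "valid n X" and vY: "valid n Y" using assms zxy by auto
  let ?S = "str n (mmul n Z (sbr n X Y))"
  have i1: "str n (mmul n (sbr n Z X) Y) = ?S" by (rule str_sbr_invariant[OF vX vY vZ])
  have i2: "str n (mmul n X (sbr n Z Y)) = - sgn n Z X * ?S"
    unfolding str_sbr_invariant[OF vZ vY vX, symmetric] sbr_antisym[of n X Z] mmul_mat_comb_left str_mat_comb i1
    by simp
  have "of_int (a + b) * ?S + sgn n Z X * (of_int b * (- sgn n Z X * ?S)) = of_int a * ?S"
    using sgn_square[of n Z X] by (simp add: algebra_simps)
  then show ?thesis
    by (simp add: zxy lcentral_def lbracket_def lsign_def i1 i2 add.assoc add.left_commute)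
qed

lemma lsign_lbracket_right:
  assumes "valid n (fst a)" "valid n (fst b)" "fst (lbracket n a b) = zmat \<Longrightarrow> T = 0"
  shows "lsign n c (lbracket n a b) * T = lsign n c a * lsign n c b * T"
  using assms sgn_sbr_right[OF assms(1,2)] by (cases "sbr n (fst a) (fst b) = zmat") (auto simp: lsign_def lbracket_def)

lemma lsign_lbracket_left:
  assumes "valid n (fst a)" "valid n (fst b)" "fst (lbracket n a b) = zmat \<Longrightarrow> T = 0"
  shows "lsign n (lbracket n a b) c * T = lsign n a c * lsign n b c * T"
  using assms sgn_sbr_left[OF assms(1,2)] by (cases "sbr n (fst a) (fst b) = zmat") (auto simp: lsign_def lbracket_def)

text \<open>The relations of the affine algebra give
  \<open>x w = (\<Sum>(c, u) \<in> commute_through n x w. c u) + (word_sign n x w) w x\<close>.\<close>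

fun commute_through :: "nat \<Rightarrow> letter \<Rightarrow> word \<Rightarrow> (complex \<times> word) list" where
  "commute_through n x [] = []"
| "commute_through n x (v # w) =
     (1, lbracket n x v # w) # (lcentral n x v, w) #
     map (\<lambda>p. (lsign n x v * fst p, v # snd p)) (commute_through n x w)"

declare commute_through.simps(2) [simp del]

definition wsum :: "(word \<Rightarrow> complex) \<Rightarrow> (complex \<times> word) list \<Rightarrow> complex" where
  "wsum f d = (\<Sum>p\<leftarrow>d. fst p * f (snd p))"

lemma length_commute_through: "p \<in> set (commute_through n x w) \<Longrightarrow> length (snd p) \<le> length w"
  by (induction w arbitrary: p) (auto simp: commute_through.simps)

lemma validw_commute_through:
  "valid n (fst x) \<Longrightarrow> validw n w \<Longrightarrow> p \<in> set (commute_through n x w) \<Longrightarrow> validw n (snd p)"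
  by (induction w arbitrary: p) (auto simp: commute_through.simps valid_lbracket)

lemma wsum_Nil [simp]: "wsum f [] = 0"
  and wsum_Cons [simp]: "wsum f (p # d) = fst p * f (snd p) + wsum f d"
  by (simp_all add: wsum_def)

lemma wsum_add [simp]: "wsum (\<lambda>u. f u + g u) d = wsum f d + wsum g d"
  and wsum_diff [simp]: "wsum (\<lambda>u. f u - g u) d = wsum f d - wsum g d"
  and wsum_cmult [simp]: "wsum (\<lambda>u. c * f u) d = c * wsum f d"
  by (induction d) (auto simp: algebra_simps)

lemma wsum_lincomb: "wsum (\<lambda>u. a * f u + b * g u) d = a * wsum f d + b * wsum g d"
  by simp

lemma wsum_zero [simp]: "wsum (\<lambda>u. 0) d = 0"
  by (induction d) auto

lemma wsum_cong: "(\<And>u. u \<in> snd ` set d \<Longrightarrow> f u = g u) \<Longrightarrow> wsum f d = wsum g d"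
  by (induction d) auto

lemma wsum_commute_through_Cons:
  "wsum f (commute_through n x (v # w)) =
     f (lbracket n x v # w) + lcentral n x v * f w + lsign n x v * wsum (\<lambda>u. f (v # u)) (commute_through n x w)"
proof -
  have "wsum f (map (\<lambda>p. (c * fst p, v # snd p)) d) = c * wsum (\<lambda>u. f (v # u)) d" for c d
    by (induction d) (auto simp: algebra_simps)
  then show ?thesis by (simp add: commute_through.simps)
qed

lemma wsum_commute_through_append:
  "wsum f (commute_through n x (u @ w)) =
     wsum (\<lambda>v. f (v @ w)) (commute_through n x u) + word_sign n x u * wsum (\<lambda>v. f (u @ v)) (commute_through n x w)"
  by (induction u arbitrary: f) (simp_all add: word_sign_def wsum_commute_through_Cons algebra_simps)

lemma wsum_commute_through:
  "wsum f (commute_through n x w) =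
     (\<Sum>k<length w. word_sign n x (take k w) *
        (f (take k w @ lbracket n x (w ! k) # drop (Suc k) w)
         + lcentral n x (w ! k) * f (take k w @ drop (Suc k) w)))"
proof (induction w arbitrary: f)
  case (Cons v w)
  show ?case
    unfolding wsum_commute_through_Cons Cons.IH length_Cons sum.lessThan_Suc_shift
    by (simp add: word_sign_def sum_distrib_left algebra_simps)
qed simp

lemma wsum_commute_through_cong:
  assumes "valid n (fst x)" "validw n w"
    and "\<And>u. length u \<le> length w \<Longrightarrow> validw n u \<Longrightarrow> f u = g u"
  shows "wsum f (commute_through n x w) = wsum g (commute_through n x w)"
proof (rule wsum_cong)
  fix u assume "u \<in> snd ` set (commute_through n x w)"
  then obtain p where "p \<in> set (commute_through n x w)" "u = snd p" by auto
  then show "f u = g u"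
    using assms(3) length_commute_through validw_commute_through[OF assms(1,2)] by simp
qed

section \<open>Matrix coefficients of the vacuum module\<close>

text \<open>\<open>eval_word n act fin r w\<close> is the matrix coefficient of \<open>w |0\<rangle>\<close> against the functional
  given by \<open>r\<close> and \<open>fin\<close>: nonnegative modes are moved to the right end, where they kill the
  vacuum, and negative modes act on \<open>r\<close>.\<close>

function eval_word ::
  "nat \<Rightarrow> (letter \<Rightarrow> state \<Rightarrow> state) \<Rightarrow> (state \<Rightarrow> complex) \<Rightarrow> state \<Rightarrow> word \<Rightarrow> complex" where
  "eval_word n act fin r [] = fin r"
| "eval_word n act fin r (x # w) =
     (if snd x < 0 then eval_word n act fin (act x r) w
      else (\<Sum>p\<leftarrow>commute_through n x w. fst p * eval_word n act fin r (snd p)))"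
  by pat_completeness auto

termination
  by (relation "measure (\<lambda>(n, act, fin, r, w). length w)")
     (auto dest!: length_commute_through simp: less_Suc_eq_le)

declare eval_word.simps(2) [simp del]

text \<open>A right action of the negative modes on states, together with a linear read-out;
  the commutator of two negative modes has no central term.\<close>

locale neg_mode_rep =
  fixes n :: nat and act :: "letter \<Rightarrow> state \<Rightarrow> state" and fin :: "state \<Rightarrow> complex"
  assumes n_pos: "0 < n"
    and act_linear: "act x (\<lambda>i. a * r i + b * r' i) = (\<lambda>i. a * act x r i + b * act x r' i)"
    and fin_linear: "fin (\<lambda>i. a * r i + b * r' i) = a * fin r + b * fin r'"
    and act_mat_comb: "act (mat_comb a X b Y, m) r = (\<lambda>i. a * act (X, m) r i + b * act (Y, m) r i)"
    and act_idm: "act (idm n, m) r = (\<lambda>i. 0)"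
    and act_commutator: "valid n X \<Longrightarrow> valid n Y \<Longrightarrow> m < 0 \<Longrightarrow> l < 0 \<Longrightarrow>
      act (Y, l) (act (X, m) r) = (\<lambda>i. sgn n X Y * act (X, m) (act (Y, l) r) i + act (sbr n X Y, m + l) r i)"
begin

abbreviation \<Phi> :: "state \<Rightarrow> word \<Rightarrow> complex" where
  "\<Phi> \<equiv> eval_word n act fin"

lemma eval_neg [simp]: "snd x < 0 \<Longrightarrow> \<Phi> r (x # w) = \<Phi> (act x r) w"
  by (simp add: eval_word.simps)

lemma eval_nonneg: "\<not> snd x < 0 \<Longrightarrow> \<Phi> r (x # w) = wsum (\<Phi> r) (commute_through n x w)"
  by (simp add: eval_word.simps wsum_def)

lemma eval_state_linear: "\<Phi> (\<lambda>i. a * r i + b * r' i) w = a * \<Phi> r w + b * \<Phi> r' w"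
proof (induction "length w" arbitrary: w r r' rule: less_induct)
  case less
  show ?case
  proof (cases w)
    case Nil then show ?thesis by (simp add: fin_linear)
  next
    case (Cons x w')
    show ?thesis
    proof (cases "snd x < 0")
      case True then show ?thesis using less Cons by (simp add: act_linear)
    next
      case False
      have "wsum (\<Phi> (\<lambda>i. a * r i + b * r' i)) (commute_through n x w')
          = wsum (\<lambda>u. a * \<Phi> r u + b * \<Phi> r' u) (commute_through n x w')"
      proof (rule wsum_cong)
        fix u assume "u \<in> snd ` set (commute_through n x w')"
        then have "length u < length w" using Cons length_commute_through by fastforce
        then show "\<Phi> (\<lambda>i. a * r i + b * r' i) u = a * \<Phi> r u + b * \<Phi> r' u" using less by blast
      qed
      then show ?thesis unfolding Cons eval_nonneg[OF False] wsum_lincomb .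
    qed
  qed
qed

lemma eval_zero_state: "\<Phi> (\<lambda>i. 0) w = 0"
  using eval_state_linear[of 0 "\<lambda>i. 0" 0 "\<lambda>i. 0" w] by simp

lemma eval_nonneg_prefix:
  assumes "\<not> snd z < 0"
  shows "\<Phi> r (z # u @ v # w) =
    wsum (\<lambda>u'. \<Phi> r (u' @ v # w)) (commute_through n z u)
    + word_sign n z u * (\<Phi> r (u @ lbracket n z v # w) + lcentral n z v * \<Phi> r (u @ w)
        + lsign n z v * wsum (\<lambda>w'. \<Phi> r (u @ v # w')) (commute_through n z w))"
  unfolding eval_nonneg[OF assms] wsum_commute_through_append wsum_commute_through_Cons by simp

lemma eval_nonneg_front:
  assumes "\<not> snd x < 0"
  shows "\<Phi> r (x # w) =
    (\<Sum>k<length w. word_sign n x (take k w) *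
       (\<Phi> r (take k w @ lbracket n x (w ! k) # drop (Suc k) w)
        + lcentral n x (w ! k) * \<Phi> r (take k w @ drop (Suc k) w)))"
  unfolding eval_nonneg[OF assms] wsum_commute_through ..

lemma eval_null_letter:
  assumes act_null: "\<And>x r. P x \<Longrightarrow> snd x < 0 \<Longrightarrow> act x r = (\<lambda>i. 0)"
    and bracket_null: "\<And>x v. P x \<Longrightarrow> valid n (fst v) \<Longrightarrow> P (lbracket n x v) \<and> P (lbracket n v x)"
    and central_null: "\<And>x v. P x \<Longrightarrow> valid n (fst v) \<Longrightarrow> lcentral n x v = 0 \<and> lcentral n v x = 0"
  shows "P x \<Longrightarrow> validw n u \<Longrightarrow> validw n w \<Longrightarrow> \<Phi> r (u @ x # w) = 0"
proof (induction "length u + length w" arbitrary: u w x r rule: less_induct)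
  case less
  have IH: "\<Phi> r' (u' @ x' # w') = 0"
    if "length u' + length w' < length u + length w" "P x'" "validw n u'" "validw n w'" for u' w' x' r'
    using less.hyps that by blast
  show ?case
  proof (cases u)
    case Nil
    show ?thesis
    proof (cases "snd x < 0")
      case True
      then show ?thesis using Nil act_null less.prems by (simp add: eval_zero_state)
    next
      case False
      have "\<Phi> r (take k w @ lbracket n x (w ! k) # drop (Suc k) w) = 0" "lcentral n x (w ! k) = 0"
        if "k < length w" for k
        using IH[of "take k w" "drop (Suc k) w"] bracket_null central_null validw_nth[of n w k] that less.prems Nil
        by (auto simp: validw_take validw_drop)
      then show ?thesis unfolding Nil append_Nil eval_nonneg_front[OF False] by simp
    qed
  next
    case (Cons z u')
    have vz: "valid n (fst z)" and vu': "validw n u'" using less.prems Cons by auto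
    show ?thesis
    proof (cases "snd z < 0")
      case True
      then show ?thesis using IH[of u' w x] vu' less.prems Cons by simp
    next
      case False
      have "wsum (\<lambda>v. \<Phi> r (v @ x # w)) (commute_through n z u') = wsum (\<lambda>v. 0) (commute_through n z u')"
        by (rule wsum_commute_through_cong[OF vz vu']) (use IH less.prems Cons in simp)
      moreover have "wsum (\<lambda>v. \<Phi> r (u' @ x # v)) (commute_through n z w) = wsum (\<lambda>v. 0) (commute_through n z w)"
        by (rule wsum_commute_through_cong[OF vz]) (use IH less.prems Cons in simp_all)
      moreover have "\<Phi> r (u' @ lbracket n z x # w) = 0" "lcentral n z x = 0"
        using IH[of u' w "lbracket n z x"] bracket_null central_null vz vu' less.prems Cons by auto
      ultimately show ?thesis unfolding Cons append_Cons eval_nonneg_prefix[OF False] by simp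
    qed
  qed
qed

lemma act_zmat: "act (zmat, m) r = (\<lambda>i. 0)"
  using act_mat_comb[of 0 zmat 0 zmat m r] by (simp add: mat_comb_zero)

lemma eval_zmat: "fst x = zmat \<Longrightarrow> validw n u \<Longrightarrow> validw n w \<Longrightarrow> \<Phi> r (u @ x # w) = 0"
  by (rule eval_null_letter[where P = "\<lambda>x. fst x = zmat"])
     (auto simp: act_zmat lbracket_def sbr_zmat_left sbr_zmat_right lcentral_def mmul_zmat_left
       mmul_zmat_right str_zmat)

lemma eval_idm: "validw n u \<Longrightarrow> validw n w \<Longrightarrow> \<Phi> r (u @ (idm n, m) # w) = 0"
  by (rule eval_null_letter[where P = "\<lambda>x. fst x = zmat \<or> fst x = idm n"])
     (auto simp: act_zmat act_idm n_pos lbracket_def sbr_zmat_left sbr_zmat_right sbr_idm_left sbr_idm_right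
       lcentral_def mmul_zmat_left mmul_zmat_right str_zmat str_mmul_idm_left str_mmul_idm_right)

lemma eval_mat_comb_front:
  assumes shorter: "\<And>u' w' X' Y' p' m'. length u' + length w' < length w \<Longrightarrow>
      validw n u' \<Longrightarrow> validw n w' \<Longrightarrow> valid n X' \<Longrightarrow> valid n Y' \<Longrightarrow> has_parity n p' X' \<Longrightarrow> has_parity n p' Y' \<Longrightarrow>
      \<Phi> r (u' @ (mat_comb a X' b Y', m') # w') = a * \<Phi> r (u' @ (X', m') # w') + b * \<Phi> r (u' @ (Y', m') # w')"
    and "\<not> m < 0" "validw n w" "valid n X" "valid n Y" "has_parity n p X" "has_parity n p Y"
  shows "\<Phi> r ((mat_comb a X b Y, m) # w) = a * \<Phi> r ((X, m) # w) + b * \<Phi> r ((Y, m) # w)"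
proof -
  have vw: "validw n w" and pX: "has_parity n p X" and pY: "has_parity n p Y" using assms by auto
  define T where "T k M = \<Phi> r (take k w @ lbracket n (M, m) (w ! k) # drop (Suc k) w)
      + lcentral n (M, m) (w ! k) * \<Phi> r (take k w @ drop (Suc k) w)" for k M
  define \<sigma> where "\<sigma> k = (\<Prod>v\<leftarrow>take k w. parity_sign p (is_odd_mat n (fst v)))" for k
  have expand: "\<Phi> r ((M, m) # w) = (\<Sum>k<length w. \<sigma> k * T k M)" if "has_parity n p M" for M
  proof -
    have "word_sign n (M, m) (take k w) * T k M = \<sigma> k * T k M" if "k < length w" for k
      unfolding \<sigma>_def
      by (rule word_sign_mult_parity[OF \<open>has_parity n p M\<close>])
         (use that vw in \<open>simp add: T_def lbracket_zmat lcentral_zmat eval_zmat validw_take validw_drop\<close>)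
    then show ?thesis
      unfolding eval_nonneg_front[of "(M, m)", simplified, OF \<open>\<not> m < 0\<close>] T_def[symmetric]
      by (intro sum.cong) auto
  qed
  have "T k (mat_comb a X b Y) = a * T k X + b * T k Y" if "k < length w" for k
  proof -
    obtain V l where v: "w ! k = (V, l)" by fastforce
    have vV: "valid n V" using validw_nth[OF vw that] v by simp
    have "\<Phi> r (take k w @ (sbr n (mat_comb a X b Y) V, m + l) # drop (Suc k) w)
        = a * \<Phi> r (take k w @ (sbr n X V, m + l) # drop (Suc k) w) + b * \<Phi> r (take k w @ (sbr n Y V, m + l) # drop (Suc k) w)"
      unfolding sbr_mat_comb_left[OF pX pY]
      by (rule shorter) (use that assms vV in \<open>auto simp: validw_take validw_drop valid_sbr intro: has_parity_sbr_left\<close>)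
    then show ?thesis by (simp add: T_def v lbracket_def lcentral_mat_comb_left algebra_simps)
  qed
  then have "(\<Sum>k<length w. \<sigma> k * T k (mat_comb a X b Y))
      = a * (\<Sum>k<length w. \<sigma> k * T k X) + b * (\<Sum>k<length w. \<sigma> k * T k Y)"
    by (simp add: sum_distrib_left sum.distrib algebra_simps)
  then show ?thesis unfolding expand[OF pX] expand[OF pY] expand[OF has_parity_mat_comb[OF pX pY]] .
qed

lemma eval_mat_comb_prefix:
  assumes shorter: "\<And>u' w' X' Y' p' m'. length u' + length w' \<le> length u + length w \<Longrightarrow>
      validw n u' \<Longrightarrow> validw n w' \<Longrightarrow> valid n X' \<Longrightarrow> valid n Y' \<Longrightarrow> has_parity n p' X' \<Longrightarrow> has_parity n p' Y' \<Longrightarrow>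
      \<Phi> r (u' @ (mat_comb a X' b Y', m') # w') = a * \<Phi> r (u' @ (X', m') # w') + b * \<Phi> r (u' @ (Y', m') # w')"
    and "\<not> snd z < 0" "valid n (fst z)" "validw n u" "validw n w"
    and "valid n X" "valid n Y" "has_parity n p X" "has_parity n p Y"
  shows "\<Phi> r (z # u @ (mat_comb a X b Y, m) # w) = a * \<Phi> r (z # u @ (X, m) # w) + b * \<Phi> r (z # u @ (Y, m) # w)"
proof -
  let ?L = "mat_comb a X b Y"
  obtain Z k where z: "z = (Z, k)" by fastforce
  have vZ: "valid n Z" and pX: "has_parity n p X" and pY: "has_parity n p Y" using assms z by auto
  define A where "A M = wsum (\<lambda>u'. \<Phi> r (u' @ (M, m) # w)) (commute_through n z u)" for M
  define D where "D M = wsum (\<lambda>w'. \<Phi> r (u @ (M, m) # w')) (commute_through n z w)" for M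
  have A: "A ?L = a * A X + b * A Y"
    unfolding A_def wsum_lincomb[symmetric]
    by (rule wsum_commute_through_cong) (use assms in auto)
  have D: "D ?L = a * D X + b * D Y"
    unfolding D_def wsum_lincomb[symmetric]
    by (rule wsum_commute_through_cong) (use assms in auto)
  have "D zmat = wsum (\<lambda>w'. 0) (commute_through n z w)"
    unfolding D_def by (rule wsum_commute_through_cong) (use assms eval_zmat in auto)
  then have D_sign: "lsign n z (M, m) * D M = parity_sign (is_odd_mat n Z) p * D M"
    if "has_parity n p M" for M
    using lsign_mult_parity_right[OF that, of "D M" z m] z by simp
  have B: "\<Phi> r (u @ lbracket n z (?L, m) # w)
      = a * \<Phi> r (u @ lbracket n z (X, m) # w) + b * \<Phi> r (u @ lbracket n z (Y, m) # w)"
    unfolding lbracket_def z fst_conv snd_conv sbr_mat_comb_right[OF pX pY]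
    by (rule shorter) (use assms vZ in \<open>auto simp: valid_sbr intro: has_parity_sbr_right\<close>)
  have "\<Phi> r (z # u @ (M, m) # w) = A M + word_sign n z u * (\<Phi> r (u @ lbracket n z (M, m) # w)
      + lcentral n z (M, m) * \<Phi> r (u @ w) + parity_sign (is_odd_mat n Z) p * D M)"
    if "has_parity n p M" for M
    unfolding eval_nonneg_prefix[OF \<open>\<not> snd z < 0\<close>] using D_sign[OF that] by (simp add: A_def D_def)
  then show ?thesis
    using A B D has_parity_mat_comb[OF pX pY] pX pY by (simp add: lcentral_mat_comb_right algebra_simps)
qed

lemma eval_mat_comb:
  assumes "validw n u" "validw n w" "valid n X" "valid n Y" "has_parity n p X" "has_parity n p Y"
  shows "\<Phi> r (u @ (mat_comb a X b Y, m) # w) = a * \<Phi> r (u @ (X, m) # w) + b * \<Phi> r (u @ (Y, m) # w)"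
  using assms
proof (induction "length u + length w" arbitrary: u w X Y p m r rule: less_induct)
  case less
  show ?case
  proof (cases u)
    case Nil
    show ?thesis
    proof (cases "m < 0")
      case True
      then show ?thesis using Nil by (simp add: act_mat_comb eval_state_linear)
    next
      case False
      then show ?thesis unfolding Nil append_Nil
        by (rule eval_mat_comb_front[rotated]) (use less Nil in auto)
    qed
  next
    case (Cons z u')
    show ?thesis
    proof (cases "snd z < 0")
      case True
      then show ?thesis using less Cons by simp
    next
      case False
      then show ?thesis unfolding Cons append_Cons
        by (rule eval_mat_comb_prefix[rotated]) (use less Cons in auto)
    qed
  qed
qed

lemma eval_nonneg_last: "0 \<le> snd x \<Longrightarrow> validw n u \<Longrightarrow> \<Phi> r (u @ [x]) = 0"
proof (induction "length u" arbitrary: u x r rule: less_induct)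
  case less
  show ?case
  proof (cases u)
    case Nil then show ?thesis using less.prems by (simp add: eval_nonneg)
  next
    case (Cons z u')
    have vz: "valid n (fst z)" and vu': "validw n u'" using less.prems Cons by auto
    show ?thesis
    proof (cases "snd z < 0")
      case True then show ?thesis using less Cons by simp
    next
      case False
      have "wsum (\<lambda>u''. \<Phi> r (u'' @ [x])) (commute_through n z u') = wsum (\<lambda>u''. 0) (commute_through n z u')"
        by (rule wsum_commute_through_cong[OF vz vu']) (use less Cons in simp)
      moreover have "\<Phi> r (u' @ [lbracket n z x]) = 0"
        using less False Cons vu' by (simp add: lbracket_def)
      ultimately show ?thesis
        using eval_nonneg_prefix[OF False, of r u' x "[]"] less.prems False Cons
        by (simp add: lcentral_nonneg)
    qed
  qed
qed

lemma wsum_commute_through_zmat: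
  assumes "fst x = zmat" "validw n u" "validw n w"
  shows "wsum (\<lambda>v. \<Phi> r (u @ v)) (commute_through n x w) = 0"
proof -
  obtain m where x: "x = (zmat, m)" using assms(1) by (cases x) simp
  have "\<Phi> r (u @ take k w @ (zmat, m') # drop (Suc k) w) = 0" for k m'
    using eval_zmat[where u = "u @ take k w" and w = "drop (Suc k) w"] assms by (simp add: validw_take validw_drop)
  then show ?thesis
    unfolding wsum_commute_through x lbracket_zmat lcentral_zmat by simp
qed

lemma wsum_commute_through_past_zmat:
  assumes "fst x = zmat" "valid n (fst z)" "validw n u" "validw n w"
  shows "wsum (\<lambda>v. \<Phi> r (u @ x # v)) (commute_through n z w) = 0"
proof -
  have "wsum (\<lambda>v. \<Phi> r (u @ x # v)) (commute_through n z w) = wsum (\<lambda>v. 0) (commute_through n z w)"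
    by (rule wsum_commute_through_cong[OF assms(2,4)]) (use assms eval_zmat in auto)
  then show ?thesis by simp
qed

lemma eval_lbracket_swap:
  assumes "validw n u" "validw n w" "valid n (fst x)" "valid n (fst y)"
  shows "\<Phi> r (u @ lbracket n y x # w) = - lsign n x y * \<Phi> r (u @ lbracket n x y # w)"
proof -
  obtain X a Y b where xy: "x = (X, a)" "y = (Y, b)" by (metis prod.exhaust)
  have p: "has_parity n (is_odd_mat n X \<noteq> is_odd_mat n Y) (sbr n X Y)" and v: "valid n (sbr n X Y)"
    using assms xy has_parity_sbr valid_sbr by auto
  show ?thesis
    using eval_mat_comb[OF assms(1,2) v v p p, of r "- sgn n X Y" 0 "a + b"]
    unfolding lbracket_def xy fst_conv snd_conv sbr_antisym[of n Y X] lsign_def by (simp add: add.commute)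
qed

lemma eval_jacobi:
  assumes "validw n u" "validw n w" "valid n (fst z)" "valid n (fst x)" "valid n (fst y)"
  shows "\<Phi> r (u @ lbracket n z (lbracket n x y) # w)
    = \<Phi> r (u @ lbracket n (lbracket n z x) y # w) + lsign n z x * \<Phi> r (u @ lbracket n x (lbracket n z y) # w)"
proof -
  obtain Z a X b Y c where zxy: "z = (Z, a)" "x = (X, b)" "y = (Y, c)" by (metis prod.exhaust)
  have vZ: "valid n Z" and vX: "valid n X" and vY: "valid n Y" using assms zxy by auto
  let ?p = "(is_odd_mat n Z \<noteq> is_odd_mat n X) \<noteq> is_odd_mat n Y"
  have pZX: "has_parity n (is_odd_mat n Z \<noteq> is_odd_mat n X) (sbr n Z X)"
    and pZY: "has_parity n (is_odd_mat n Z \<noteq> is_odd_mat n Y) (sbr n Z Y)"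
    using has_parity_sbr vZ vX vY by auto
  have "has_parity n ?p (sbr n (sbr n Z X) Y)"
    using has_parity_sbr_left[OF pZX vY] .
  moreover have "has_parity n ?p (sbr n X (sbr n Z Y))"
  proof -
    have "(is_odd_mat n X \<noteq> (is_odd_mat n Z \<noteq> is_odd_mat n Y)) = ?p" by blast
    then show ?thesis using has_parity_sbr_right[OF pZY vX] by simp
  qed
  moreover have assoc: "a + (b + c) = (a + b) + c" "b + (a + c) = (a + b) + c" by simp_all
  ultimately show ?thesis
    using eval_mat_comb[OF assms(1,2) valid_sbr[OF valid_sbr[OF vZ vX] vY] valid_sbr[OF vX valid_sbr[OF vZ vY]],
      of ?p r 1 "sgn n Z X" "a + b + c"]
    unfolding zxy lbracket_def fst_conv snd_conv sbr_jacobi[OF vX vY vZ] lsign_def assoc by simp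
qed

text \<open>Moving \<open>x\<close> and then \<open>y\<close> through \<open>w\<close>, minus the reverse order, amounts to moving
  \<open>[y, x]\<close>; where both hit the same letter, the Jacobi identity and the cocycle property of
  \<open>lcentral\<close> take over.\<close>

lemma wsum_commute_through_commutator:
  assumes "valid n (fst x)" "valid n (fst y)" "validw n w" "validw n u"
  shows "wsum (\<lambda>w'. wsum (\<lambda>v. \<Phi> r (u @ v)) (commute_through n y w')) (commute_through n x w)
      - lsign n x y * wsum (\<lambda>w'. wsum (\<lambda>v. \<Phi> r (u @ v)) (commute_through n x w')) (commute_through n y w)
      = wsum (\<lambda>v. \<Phi> r (u @ v)) (commute_through n (lbracket n y x) w)"
  using assms
proof (induction w arbitrary: u)
  case Nil then show ?case by simp
next
  case (Cons v w)
  let ?f = "\<lambda>w'. \<Phi> r (u @ w')"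
  have vx: "valid n (fst x)" and vy: "valid n (fst y)" and vv: "valid n (fst v)" and vw: "validw n w"
    and vu: "validw n u" using Cons.prems by auto
  have ih: "wsum (\<lambda>w'. wsum (\<lambda>v'. ?f (v # v')) (commute_through n y w')) (commute_through n x w)
      - lsign n x y * wsum (\<lambda>w'. wsum (\<lambda>v'. ?f (v # v')) (commute_through n x w')) (commute_through n y w)
      = wsum (\<lambda>v'. ?f (v # v')) (commute_through n (lbracket n y x) w)"
    using Cons.IH[of "u @ [v]"] Cons.prems by simp
  have jacobi: "?f (lbracket n y (lbracket n x v) # w)
      = ?f (lbracket n (lbracket n y x) v # w) + lsign n y x * ?f (lbracket n x (lbracket n y v) # w)"
    by (rule eval_jacobi[OF vu vw vy vx vv])
  have cocycle: "lcentral n (lbracket n y x) v + lsign n y x * lcentral n x (lbracket n y v) = lcentral n y (lbracket n x v)"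
    by (rule lcentral_cocycle[OF vy vx vv])
  have s1: "lsign n y (lbracket n x v) * wsum (\<lambda>v'. ?f (lbracket n x v # v')) (commute_through n y w)
      = lsign n y x * lsign n y v * wsum (\<lambda>v'. ?f (lbracket n x v # v')) (commute_through n y w)"
    by (rule lsign_lbracket_right[OF vx vv]) (use wsum_commute_through_past_zmat vy vu vw in simp)
  have s2: "lsign n x (lbracket n y v) * wsum (\<lambda>v'. ?f (lbracket n y v # v')) (commute_through n x w)
      = lsign n x y * lsign n x v * wsum (\<lambda>v'. ?f (lbracket n y v # v')) (commute_through n x w)"
    by (rule lsign_lbracket_right[OF vy vv]) (use wsum_commute_through_past_zmat vx vu vw in simp)
  have s3: "lsign n (lbracket n y x) v * wsum (\<lambda>v'. ?f (v # v')) (commute_through n (lbracket n y x) w)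
      = lsign n y v * lsign n x v * wsum (\<lambda>v'. ?f (v # v')) (commute_through n (lbracket n y x) w)"
    by (rule lsign_lbracket_left[OF vy vx])
       (use wsum_commute_through_zmat[of "lbracket n y x" "u @ [v]" w] vu vv vw in simp)
  have o1: "lcentral n x v * (lsign n y x - lsign n y v) = 0" by (rule lcentral_same_parity[OF vx vv])
  have o2: "lcentral n y v * (lsign n x y - lsign n x v) = 0" by (rule lcentral_same_parity[OF vy vv])
  have q: "lsign n y x = lsign n x y" "lsign n x y * lsign n x y = 1" "lsign n x v * lsign n x v = 1"
    "lsign n y v * lsign n y v = 1" by (simp_all add: lsign_commute lsign_square)
  show ?case
    unfolding wsum_commute_through_Cons wsum_add wsum_cmult
    using jacobi cocycle s1 s2 s3 o1 o2 q ih by algebra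
qed

lemma eval_commutator_front:
  assumes "validw n w" "valid n (fst x)" "valid n (fst y)"
  shows "\<Phi> r (x # y # w) - lsign n x y * \<Phi> r (y # x # w) = \<Phi> r (lbracket n x y # w) + lcentral n x y * \<Phi> r w"
proof -
  have q: "lsign n x y * lsign n x y = 1" "lsign n y x = lsign n x y" by (simp_all add: lsign_square lsign_commute)
  consider "snd x < 0" "snd y < 0" | "\<not> snd x < 0" "snd y < 0" | "snd x < 0" "\<not> snd y < 0"
    | "\<not> snd x < 0" "\<not> snd y < 0" by blast
  then show ?thesis
  proof cases
    case 1
    obtain X a Y b where xy: "x = (X, a)" "y = (Y, b)" by (metis prod.exhaust)
    have "act y (act x r) = (\<lambda>i. lsign n x y * act x (act y r) i + act (lbracket n x y) r i)"
      using act_commutator[of X Y a b r] assms 1 xy by (simp add: lsign_def lbracket_def)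
    then show ?thesis
      using 1 eval_state_linear[of "lsign n x y" "act x (act y r)" 1 "act (lbracket n x y) r" w]
      by (simp add: lbracket_def lcentral_def)
  next
    case 2
    then show ?thesis
      unfolding eval_nonneg[OF 2(1)] wsum_commute_through_Cons eval_neg[OF 2(2)] by simp
  next
    case 3
    have "\<Phi> r (lbracket n y x # w) = - lsign n x y * \<Phi> r (lbracket n x y # w)"
      using eval_lbracket_swap[of "[]" w x y r] assms by simp
    moreover have "lcentral n y x = - lsign n x y * lcentral n x y"
      using lcentral_antisym[OF assms(3,2)] q by simp
    ultimately show ?thesis
      unfolding eval_neg[OF 3(1)] eval_nonneg[OF 3(2)] wsum_commute_through_Cons using q by algebra
  next
    case 4
    have "\<Phi> r (lbracket n y x # w) = wsum (\<Phi> r) (commute_through n (lbracket n y x) w)"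
      by (rule eval_nonneg) (use 4 in \<open>simp add: lbracket_def\<close>)
    moreover have "lcentral n x y = 0" "lcentral n y x = 0"
      using 4 by (simp_all add: lcentral_nonneg)
    moreover have "wsum (\<lambda>w'. wsum (\<Phi> r) (commute_through n y w')) (commute_through n x w)
        - lsign n x y * wsum (\<lambda>w'. wsum (\<Phi> r) (commute_through n x w')) (commute_through n y w)
        = wsum (\<Phi> r) (commute_through n (lbracket n y x) w)"
      using wsum_commute_through_commutator[OF assms(2,3,1) validw_Nil, of r] by simp
    ultimately show ?thesis
      unfolding eval_nonneg[OF 4(1)] eval_nonneg[OF 4(2)] wsum_commute_through_Cons q(2)
      by (simp add: algebra_simps eq_diff_eq)
  qed
qed

lemma wsum_commute_through_commutator_hit:
  assumes commutator: "\<And>w' x' y'. length w' \<le> length w \<Longrightarrow> validw n w' \<Longrightarrow>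
      valid n (fst x') \<Longrightarrow> valid n (fst y') \<Longrightarrow>
      \<Phi> r (u @ x' # y' # w') - lsign n x' y' * \<Phi> r (u @ y' # x' # w')
      = \<Phi> r (u @ lbracket n x' y' # w') + lcentral n x' y' * \<Phi> r (u @ w')"
    and valid: "validw n u" "validw n w" "valid n (fst z)" "valid n (fst x)" "valid n (fst y)"
  shows "wsum (\<lambda>v. \<Phi> r (u @ v)) (commute_through n z (x # y # w))
      - lsign n x y * wsum (\<lambda>v. \<Phi> r (u @ v)) (commute_through n z (y # x # w))
    = wsum (\<lambda>v. \<Phi> r (u @ v)) (commute_through n z (lbracket n x y # w))
      + lcentral n x y * wsum (\<lambda>v. \<Phi> r (u @ v)) (commute_through n z w)"
proof -
  let ?f = "\<lambda>v. \<Phi> r (u @ v)"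
  have vzx: "valid n (fst (lbracket n z x))" and vzy: "valid n (fst (lbracket n z y))"
    using valid by (simp_all add: valid_lbracket)
  have passing: "wsum (\<lambda>v. ?f (x # y # v)) (commute_through n z w)
      - lsign n x y * wsum (\<lambda>v. ?f (y # x # v)) (commute_through n z w)
      = wsum (\<lambda>v. ?f (lbracket n x y # v)) (commute_through n z w) + lcentral n x y * wsum ?f (commute_through n z w)"
  proof -
    have "wsum (\<lambda>v. ?f (x # y # v) - lsign n x y * ?f (y # x # v)) (commute_through n z w)
        = wsum (\<lambda>v. ?f (lbracket n x y # v) + lcentral n x y * ?f v) (commute_through n z w)"
      by (rule wsum_commute_through_cong[OF valid(3,2)]) (use commutator valid in simp)
    then show ?thesis by simp
  qed
  have h1: "?f (lbracket n z x # y # w) - lsign n (lbracket n z x) y * ?f (y # lbracket n z x # w)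
      = ?f (lbracket n (lbracket n z x) y # w) + lcentral n (lbracket n z x) y * ?f w"
    using commutator[of w "lbracket n z x" y] vzx valid by simp
  have h2: "?f (x # lbracket n z y # w) - lsign n x (lbracket n z y) * ?f (lbracket n z y # x # w)
      = ?f (lbracket n x (lbracket n z y) # w) + lcentral n x (lbracket n z y) * ?f w"
    using commutator[of w x "lbracket n z y"] vzy valid by simp
  have jacobi: "?f (lbracket n z (lbracket n x y) # w)
      = ?f (lbracket n (lbracket n z x) y # w) + lsign n z x * ?f (lbracket n x (lbracket n z y) # w)"
    by (rule eval_jacobi[OF valid(1,2,3,4,5)])
  have cocycle: "lcentral n (lbracket n z x) y + lsign n z x * lcentral n x (lbracket n z y) = lcentral n z (lbracket n x y)"
    by (rule lcentral_cocycle[OF valid(3,4,5)])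
  have s1: "lsign n (lbracket n z x) y * ?f (y # lbracket n z x # w) = lsign n z y * lsign n x y * ?f (y # lbracket n z x # w)"
    by (rule lsign_lbracket_left[OF valid(3,4)]) (use eval_zmat[where u = "u @ [y]" and w = w and r = r] valid in simp)
  have s2: "lsign n x (lbracket n z y) * ?f (lbracket n z y # x # w) = lsign n x z * lsign n x y * ?f (lbracket n z y # x # w)"
    by (rule lsign_lbracket_right[OF valid(3,5)]) (use eval_zmat[where u = u and w = "x # w" and r = r] valid in simp)
  have s3: "lsign n z (lbracket n x y) * wsum (\<lambda>v. ?f (lbracket n x y # v)) (commute_through n z w)
      = lsign n z x * lsign n z y * wsum (\<lambda>v. ?f (lbracket n x y # v)) (commute_through n z w)"
    by (rule lsign_lbracket_right[OF valid(4,5)]) (use wsum_commute_through_past_zmat valid in simp)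
  have o1: "lcentral n z x * (lsign n y z - lsign n y x) = 0" by (rule lcentral_same_parity[OF valid(3,4)])
  have o2: "lcentral n z y * (lsign n x z - lsign n x y) = 0" by (rule lcentral_same_parity[OF valid(3,5)])
  have o3: "lcentral n x y * (lsign n z x - lsign n z y) = 0" by (rule lcentral_same_parity[OF valid(4,5)])
  have q: "lsign n y z = lsign n z y" "lsign n x z = lsign n z x" "lsign n y x = lsign n x y"
    "lsign n z x * lsign n z x = 1" "lsign n z y * lsign n z y = 1" "lsign n x y * lsign n x y = 1"
    by (simp_all add: lsign_commute lsign_square)
  show ?thesis
    unfolding wsum_commute_through_Cons
    using passing h1 h2 jacobi cocycle s1 s2 s3 o1 o2 o3 q by algebra
qed

lemma eval_commutator:
  assumes "validw n u" "validw n w" "valid n (fst x)" "valid n (fst y)"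
  shows "\<Phi> r (u @ x # y # w) - lsign n x y * \<Phi> r (u @ y # x # w)
    = \<Phi> r (u @ lbracket n x y # w) + lcentral n x y * \<Phi> r (u @ w)"
  using assms
proof (induction "length u + length w" arbitrary: u w x y r rule: less_induct)
  case less
  show ?case
  proof (cases u)
    case Nil
    then show ?thesis using eval_commutator_front less.prems by simp
  next
    case (Cons z u')
    have vz: "valid n (fst z)" and vu': "validw n u'" using less.prems Cons by auto
    show ?thesis
    proof (cases "snd z < 0")
      case True
      then show ?thesis using less.hyps[of u' w] less.prems Cons vu' by simp
    next
      case False
      let ?s = "lsign n x y" and ?c = "lcentral n x y"
      have split: "\<Phi> r (u @ w') = wsum (\<lambda>v. \<Phi> r (v @ w')) (commute_through n z u')
          + word_sign n z u' * wsum (\<lambda>v. \<Phi> r (u' @ v)) (commute_through n z w')" for w'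
        unfolding Cons append_Cons eval_nonneg[OF False] wsum_commute_through_append ..
      have "wsum (\<lambda>v. \<Phi> r (v @ x # y # w) - ?s * \<Phi> r (v @ y # x # w)) (commute_through n z u')
          = wsum (\<lambda>v. \<Phi> r (v @ lbracket n x y # w) + ?c * \<Phi> r (v @ w)) (commute_through n z u')"
        by (rule wsum_commute_through_cong[OF vz vu']) (use less Cons in simp)
      moreover have "wsum (\<lambda>v. \<Phi> r (u' @ v)) (commute_through n z (x # y # w))
          - ?s * wsum (\<lambda>v. \<Phi> r (u' @ v)) (commute_through n z (y # x # w))
          = wsum (\<lambda>v. \<Phi> r (u' @ v)) (commute_through n z (lbracket n x y # w))
            + ?c * wsum (\<lambda>v. \<Phi> r (u' @ v)) (commute_through n z w)"
        by (rule wsum_commute_through_commutator_hit) (use less Cons vz vu' in auto)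
      ultimately show ?thesis
        unfolding split[of "x # y # w"] split[of "y # x # w"] split[of "lbracket n x y # w"] split[of w]
        by (simp add: algebra_simps)
    qed
  qed
qed

end

section \<open>The left ideal\<close>

definition lin_ext :: "(word \<Rightarrow> complex) \<Rightarrow> falg \<Rightarrow> complex" where
  "lin_ext F a = (\<Sum>u | a u \<noteq> 0. a u * F u)"

definition vanishes_on :: "(word \<Rightarrow> complex) \<Rightarrow> falg \<Rightarrow> bool" where
  "vanishes_on F a \<longleftrightarrow> finite {u. a u \<noteq> 0} \<and> lin_ext F a = 0"

lemma lin_ext_eq_sum: "finite S \<Longrightarrow> {u. a u \<noteq> 0} \<subseteq> S \<Longrightarrow> lin_ext F a = (\<Sum>u\<in>S. a u * F u)"
  unfolding lin_ext_def by (rule sum.mono_neutral_left) auto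

lemma finite_support_fadd: "finite {u. a u \<noteq> 0} \<Longrightarrow> finite {u. b u \<noteq> 0} \<Longrightarrow> finite {u. fadd a b u \<noteq> 0}"
  and finite_support_fsub: "finite {u. a u \<noteq> 0} \<Longrightarrow> finite {u. b u \<noteq> 0} \<Longrightarrow> finite {u. fsub a b u \<noteq> 0}"
  by (auto simp: fadd_def fsub_def intro: finite_subset[of _ "{u. a u \<noteq> 0} \<union> {u. b u \<noteq> 0}"])

lemma finite_support_fscale: "finite {u. a u \<noteq> 0} \<Longrightarrow> finite {u. fscale c a u \<noteq> 0}"
  by (auto simp: fscale_def intro: finite_subset[of _ "{u. a u \<noteq> 0}"])

lemma finite_support_mono: "finite {u. mono w u \<noteq> 0}"
  by (auto simp: mono_def intro: finite_subset[of _ "{w}"])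

lemma lin_ext_fadd:
  assumes "finite {u. a u \<noteq> 0}" "finite {u. b u \<noteq> 0}"
  shows "lin_ext F (fadd a b) = lin_ext F a + lin_ext F b"
proof -
  let ?S = "{u. a u \<noteq> 0} \<union> {u. b u \<noteq> 0}"
  have "lin_ext F (fadd a b) = (\<Sum>u\<in>?S. a u * F u) + (\<Sum>u\<in>?S. b u * F u)"
    using assms by (subst lin_ext_eq_sum[of ?S]) (auto simp: fadd_def sum.distrib algebra_simps)
  then show ?thesis using assms by (simp add: lin_ext_eq_sum[of ?S])
qed

lemma lin_ext_fsub:
  assumes "finite {u. a u \<noteq> 0}" "finite {u. b u \<noteq> 0}"
  shows "lin_ext F (fsub a b) = lin_ext F a - lin_ext F b"
proof -
  let ?S = "{u. a u \<noteq> 0} \<union> {u. b u \<noteq> 0}"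
  have "lin_ext F (fsub a b) = (\<Sum>u\<in>?S. a u * F u) - (\<Sum>u\<in>?S. b u * F u)"
    using assms by (subst lin_ext_eq_sum[of ?S]) (auto simp: fsub_def sum_subtractf algebra_simps)
  then show ?thesis using assms by (simp add: lin_ext_eq_sum[of ?S])
qed

lemma lin_ext_fscale: "finite {u. a u \<noteq> 0} \<Longrightarrow> lin_ext F (fscale c a) = c * lin_ext F a"
  by (subst lin_ext_eq_sum[of "{u. a u \<noteq> 0}"]) (auto simp: lin_ext_def fscale_def sum_distrib_left algebra_simps)

lemma lin_ext_mono: "lin_ext F (mono w) = F w"
  by (subst lin_ext_eq_sum[of "{w}"]) (auto simp: mono_def)

lemma finite_splits: "finite {(v1, v2). v1 @ v2 = (v :: 'a list)}"
proof (rule finite_subset[of _ "(\<lambda>k. (take k v, drop k v)) ` {..length v}"])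
  show "{(v1, v2). v1 @ v2 = v} \<subseteq> (\<lambda>k. (take k v, drop k v)) ` {..length v}"
  proof
    fix p assume "p \<in> {(v1, v2). v1 @ v2 = v}"
    then obtain v1 v2 where "p = (v1, v2)" "v1 @ v2 = v" by auto
    then show "p \<in> (\<lambda>k. (take k v, drop k v)) ` {..length v}"
      by (intro image_eqI[of _ _ "length v1"]) auto
  qed
qed auto

lemma fmul_mono_right:
  "fmul a (mono w) = (\<lambda>v. if \<exists>v'. v = v' @ w then a (take (length v - length w) v) else 0)"
proof (rule ext)
  fix v :: word
  let ?S = "{(v1, v2). v1 @ v2 = v}"
  have "fmul a (mono w) v = (\<Sum>p\<in>?S. if p = (take (length v - length w) v, w) then a (fst p) else 0)"
    unfolding fmul_def by (rule sum.cong) (auto simp: mono_def split: if_splits)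
  also have "\<dots> = (if (take (length v - length w) v, w) \<in> ?S then a (take (length v - length w) v) else 0)"
    using finite_splits[of v] by (simp add: sum.delta')
  also have "\<dots> = (if \<exists>v'. v = v' @ w then a (take (length v - length w) v) else 0)"
    by (auto simp: append_eq_conv_conj) (metis append_take_drop_id)+
  finally show "fmul a (mono w) v = (if \<exists>v'. v = v' @ w then a (take (length v - length w) v) else 0)" .
qed

lemma fmul_mono_mono: "fmul (mono u) (mono v) = mono (u @ v)"
  unfolding fmul_mono_right by (rule ext) (auto simp: mono_def)

lemma fmul_fsub_left: "fmul (fsub a b) c = fsub (fmul a c) (fmul b c)"
  and fmul_fsub_right: "fmul c (fsub a b) = fsub (fmul c a) (fmul c b)"
  and fmul_fscale_left: "fmul (fscale k a) c = fscale k (fmul a c)"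
  and fmul_fscale_right: "fmul c (fscale k a) = fscale k (fmul c a)"
  and fmul_fadd_left: "fmul (fadd a b) c = fadd (fmul a c) (fmul b c)"
  by (simp_all add: fmul_def fsub_def fscale_def fadd_def fun_eq_iff sum_subtractf sum.distrib
      sum_distrib_left algebra_simps case_prod_beta)

lemmas fmul_context_simps =
  fmul_fsub_left fmul_fsub_right fmul_fscale_left fmul_fscale_right fmul_mono_mono append_assoc

lemma finite_support_fmul_mono: "finite {u. a u \<noteq> 0} \<Longrightarrow> finite {u. fmul a (mono t) u \<noteq> 0}"
  by (rule finite_subset[of _ "(\<lambda>w. w @ t) ` {u. a u \<noteq> 0}"]) (auto simp: fmul_mono_right)

lemma lin_ext_fmul_mono:
  assumes "finite {u. a u \<noteq> 0}"
  shows "lin_ext F (fmul a (mono t)) = (\<Sum>w | a w \<noteq> 0. a w * F (w @ t))"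
proof -
  have "lin_ext F (fmul a (mono t)) = (\<Sum>v\<in>(\<lambda>w. w @ t) ` {u. a u \<noteq> 0}. fmul a (mono t) v * F v)"
    by (rule lin_ext_eq_sum) (use assms in \<open>auto simp: fmul_mono_right\<close>)
  also have "\<dots> = (\<Sum>w | a w \<noteq> 0. a w * F (w @ t))"
    by (simp add: sum.reindex inj_on_def fmul_mono_right)
  finally show ?thesis .
qed

lemma vanishes_on_Jid:
  assumes rel: "\<And>\<rho> u w. \<rho> \<in> rels n \<Longrightarrow> validw n u \<Longrightarrow> validw n w \<Longrightarrow> vanishes_on F (fmul (mono u) (fmul \<rho> (mono w)))"
    and ann: "\<And>u X m. validw n u \<Longrightarrow> valid n X \<Longrightarrow> 0 \<le> m \<Longrightarrow> vanishes_on F (fmul (mono u) (mono [(X, m)]))"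
  shows "a \<in> Jid n \<Longrightarrow> vanishes_on F a"
proof (induction rule: Jid.induct)
  case zero then show ?case by (simp add: vanishes_on_def lin_ext_def)
next
  case (add a b) then show ?case by (simp add: vanishes_on_def lin_ext_fadd finite_support_fadd)
next
  case (scale a c) then show ?case by (simp add: vanishes_on_def lin_ext_fscale finite_support_fscale)
qed (use rel ann in blast)+

context neg_mode_rep
begin

theorem vanishes_on_eval_Jid: "a \<in> Jid n \<Longrightarrow> vanishes_on (\<Phi> r) a"
proof (rule vanishes_on_Jid)
  fix \<rho> u w assume \<rho>: "\<rho> \<in> rels n" and vu: "validw n u" and vw: "validw n w"
  from \<rho> show "vanishes_on (\<Phi> r) (fmul (mono u) (fmul \<rho> (mono w)))"
  proof (cases rule: rels.cases)
    case (lin X Y a b m)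
    have "\<Phi> r (u @ (mat_comb a X b Y, m) # w) = a * \<Phi> r (u @ (X, m) # w) + b * \<Phi> r (u @ (Y, m) # w)"
      using lin has_parity_valid[of n X] has_parity_valid[of n Y] by (intro eval_mat_comb[OF vu vw]) auto
    then show ?thesis unfolding lin(1) fmul_context_simps mat_comb_def[symmetric]
      by (simp add: vanishes_on_def finite_support_fsub finite_support_fscale finite_support_mono
          lin_ext_fsub lin_ext_fscale lin_ext_mono)
  next
    case (cent m)
    then show ?thesis unfolding cent fmul_context_simps
      using eval_idm[OF vu vw] by (simp add: vanishes_on_def finite_support_mono lin_ext_mono)
  next
    case (brk X Y m l)
    have "\<Phi> r (u @ (X, m) # (Y, l) # w) - lsign n (X, m) (Y, l) * \<Phi> r (u @ (Y, l) # (X, m) # w)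
        = \<Phi> r (u @ lbracket n (X, m) (Y, l) # w) + lcentral n (X, m) (Y, l) * \<Phi> r (u @ w)"
      using brk by (intro eval_commutator[OF vu vw]) auto
    then show ?thesis unfolding brk(1) fmul_context_simps
      by (simp add: vanishes_on_def finite_support_fsub finite_support_fscale finite_support_mono
          lin_ext_fsub lin_ext_fscale lin_ext_mono lsign_def lbracket_def lcentral_def algebra_simps)
  qed
next
  fix u X and m :: int
  assume "validw n u" "valid n X" "0 \<le> m"
  then show "vanishes_on (\<Phi> r) (fmul (mono u) (mono [(X, m)]))"
    using eval_nonneg_last[of "(X, m)" u r]
    by (simp add: fmul_mono_mono vanishes_on_def finite_support_mono lin_ext_mono)
qed

end

lemma Jid_lincomb:
  "(\<forall>g\<in>set gs. snd g \<in> Jid n) \<Longrightarrow> (\<And>v. t v = (\<Sum>g\<leftarrow>gs. fst g * snd g v)) \<Longrightarrow> t \<in> Jid n"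
proof (induction gs arbitrary: t)
  case Nil
  then have "t = (\<lambda>_. 0)" by (simp add: fun_eq_iff)
  then show ?case using Jid.zero by simp
next
  case (Cons g gs)
  let ?t = "\<lambda>v. \<Sum>g\<leftarrow>gs. fst g * snd g v"
  have "?t \<in> Jid n" using Cons by simp
  then have "fadd (fscale (fst g) (snd g)) ?t \<in> Jid n" using Cons.prems by (simp add: Jid.add Jid.scale)
  moreover have "t = fadd (fscale (fst g) (snd g)) ?t" using Cons.prems by (simp add: fun_eq_iff fadd_def fscale_def)
  ultimately show ?case by simp
qed

definition commutator_rel :: "nat \<Rightarrow> word \<Rightarrow> letter \<Rightarrow> letter \<Rightarrow> word \<Rightarrow> falg" where
  "commutator_rel n u x y w =
     fsub (fsub (fsub (mono (u @ x # y # w)) (fscale (lsign n x y) (mono (u @ y # x # w))))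
       (mono (u @ lbracket n x y # w))) (fscale (lcentral n x y) (mono (u @ w)))"

definition mat_comb_rel :: "nat \<Rightarrow> word \<Rightarrow> complex \<Rightarrow> smat \<Rightarrow> complex \<Rightarrow> smat \<Rightarrow> int \<Rightarrow> word \<Rightarrow> falg" where
  "mat_comb_rel n u a X b Y m w =
     fsub (fsub (mono (u @ (mat_comb a X b Y, m) # w)) (fscale a (mono (u @ (X, m) # w))))
       (fscale b (mono (u @ (Y, m) # w)))"

lemma commutator_rel_Jid:
  assumes "validw n u" "validw n w" "valid n (fst x)" "valid n (fst y)"
  shows "commutator_rel n u x y w \<in> Jid n"
  using Jid.rel[OF rels.brk[OF assms(3,4), of "snd x" "snd y"] assms(1,2)]
  by (simp add: commutator_rel_def lsign_def lbracket_def lcentral_def fmul_context_simps)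

lemma mat_comb_rel_Jid:
  assumes "validw n u" "validw n w" "valid n X" "valid n Y" "is_odd_mat n X = is_odd_mat n Y"
  shows "mat_comb_rel n u a X b Y m w \<in> Jid n"
  using Jid.rel[OF rels.lin[OF assms(3,4,5), of a b m] assms(1,2)]
  by (simp add: mat_comb_rel_def fmul_context_simps mat_comb_def[symmetric])

lemma Jid_annihilate: "validw n u \<Longrightarrow> valid n X \<Longrightarrow> 0 \<le> m \<Longrightarrow> mono (u @ [(X, m)]) \<in> Jid n"
  using Jid.ann[of n u X m] by (simp add: fmul_mono_mono)

lemma Jid_zmat:
  assumes "validw n u" "validw n w"
  shows "mono (u @ (zmat, m) # w) \<in> Jid n"
  using mat_comb_rel_Jid[OF assms valid_zmat valid_zmat refl, of 0 0 m]
  by (simp add: mat_comb_rel_def mat_comb_zero fsub_def fscale_def)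

section \<open>The singular vector\<close>

lemma mmul_Emat_right: "1 \<le> p \<Longrightarrow> p \<le> 2*n \<Longrightarrow> mmul n A (Emat p q) = (\<lambda>i j. if j = q then A i p else 0)"
  by (auto simp: mmul_def Emat_def fun_eq_iff if_distrib[of "\<lambda>x. _ * x"] cong: if_cong)

lemma mmul_Emat_left: "1 \<le> q \<Longrightarrow> q \<le> 2*n \<Longrightarrow> mmul n (Emat p q) A = (\<lambda>i j. if i = p then A q j else 0)"
  by (auto simp: mmul_def Emat_def fun_eq_iff if_distrib[of "\<lambda>x. x * _"] cong: if_cong)

lemma str_single_column:
  "1 \<le> q \<Longrightarrow> q \<le> 2*n \<Longrightarrow> str n (\<lambda>i j. if j = q then A i p else 0) = super_sign n q * A q p"
  by (simp add: str_eq_super_sign_sum if_distrib[of "\<lambda>x. _ * x"] cong: if_cong)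

locale psl_rank_ge2 =
  fixes n :: nat
  assumes n_ge2: "2 \<le> n"
begin

abbreviation E1 :: smat where "E1 \<equiv> Emat 1 (2*n-1)"

abbreviation E2 :: smat where "E2 \<equiv> Emat 1 (2*n)"

abbreviation chi :: word where "chi \<equiv> [(E1, -1), (E2, -1)]"

lemma indices: "1 \<le> 2*n-1" "2*n-1 \<le> 2*n" "2*n-1 \<noteq> 1" "2*n \<noteq> 1" "2*n-1 \<noteq> 2*n" "1 \<le> 2*n"
  "n < 2*n-1" "\<not> 2*n - 1 \<le> n" "\<not> 2*n \<le> n"
  using n_ge2 by auto

lemma has_parity_E1: "has_parity n True E1" and has_parity_E2: "has_parity n True E2"
  using indices by (auto simp: has_parity_def Emat_def odd_entry_def)

lemma valid_E1: "valid n E1" and valid_E2: "valid n E2"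
  by (rule validI[OF _ _ has_parity_E1] validI[OF _ _ has_parity_E2];
      use indices in \<open>auto simp: is_mat_def Emat_def str_def\<close>)+

lemma is_odd_E1: "is_odd_mat n E1" and is_odd_E2: "is_odd_mat n E2"
proof -
  have "E1 \<noteq> zmat" "E2 \<noteq> zmat" using indices by (auto simp: zmat_def Emat_def fun_eq_iff)
  then show "is_odd_mat n E1" "is_odd_mat n E2"
    using is_odd_mat_eq_parity has_parity_E1 has_parity_E2 by auto
qed

lemma validw_chi: "validw n chi"
  using valid_E1 valid_E2 by simp

lemma first_column_if_even:
  assumes "valid n Y" "\<not> is_odd_mat n Y"
  shows "Y (2*n-1) 1 = 0 \<and> Y (2*n) 1 = 0"
proof -
  have "odd_entry n (2*n-1) 1" "odd_entry n (2*n) 1" using indices by (auto simp: odd_entry_def)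
  then show ?thesis using has_parity_valid[OF assms(1)] assms(2) by (auto simp: has_parity_def)
qed

lemma sgn_odd_E: "is_odd_mat n Y \<Longrightarrow> sgn n Y E1 = -1" "is_odd_mat n Y \<Longrightarrow> sgn n Y E2 = -1"
  using is_odd_E1 is_odd_E2 by (auto simp: sgn_def)

lemma sbr_E1: "sbr n Y E1 = (\<lambda>i j. (if j = 2*n-1 then Y i 1 else 0) - sgn n Y E1 * (if i = 1 then Y (2*n-1) j else 0))"
  unfolding sbr_def mmul_Emat_right[OF order_refl indices(6)] mmul_Emat_left[OF indices(1,2)] by simp

lemma sbr_E2: "sbr n Y E2 = (\<lambda>i j. (if j = 2*n then Y i 1 else 0) - sgn n Y E2 * (if i = 1 then Y (2*n) j else 0))"
  unfolding sbr_def mmul_Emat_right[OF order_refl indices(6)] mmul_Emat_left[OF indices(6) order_refl] by simp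

lemma str_mmul_E1: "str n (mmul n Y E1) = - Y (2*n-1) 1"
  and str_mmul_E2: "str n (mmul n Y E2) = - Y (2*n) 1"
  unfolding mmul_Emat_right[OF order_refl indices(6)] str_single_column[OF indices(1,2)]
    str_single_column[OF indices(6) order_refl]
  using indices by (simp_all add: super_sign_def)

lemma zero_mode_chi_Jid:
  assumes vY: "valid n Y" and up: "strictly_upper n Y" and vu: "validw n u"
  shows "mono (u @ (Y, 0) # chi) \<in> Jid n"
proof -
  let ?sy = "sgn n Y E1" and ?sf = "sgn n Y E2"
  let ?c = "- ?sy * Y (2*n-1) (2*n)"
  have upY: "Y i j \<noteq> 0 \<Longrightarrow> i < j \<and> 1 \<le> i \<and> j \<le> 2*n" for i j
    using up by (auto simp: strictly_upper_def is_mat_def)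
  have Y1: "Y i 1 = 0" and Y2: "Y (2*n) j = 0" and Y3: "j \<noteq> 2*n \<Longrightarrow> Y (2*n-1) j = 0" for i j
    using upY[of i 1] upY[of "2*n" j] upY[of "2*n-1" j] by linarith+
  have YE1: "sbr n Y E1 = mat_comb ?c E2 0 E2"
    unfolding sbr_E1 using Y1 Y3 by (auto simp: fun_eq_iff mat_comb_def Emat_def)
  have YE2: "sbr n Y E2 = zmat"
    unfolding sbr_E2 using Y1 Y2 by (auto simp: fun_eq_iff zmat_def)
  have E2E2: "sbr n E2 E2 = zmat"
    unfolding sbr_def mmul_Emat_right[OF order_refl indices(6)] using indices by (auto simp: fun_eq_iff Emat_def zmat_def)
  have sE2: "sgn n E2 E2 = -1" using is_odd_E2 by (simp add: sgn_def)
  let ?gs = "[(1, commutator_rel n u (Y, 0) (E1, -1) [(E2, -1)]),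
    (?sy, commutator_rel n (u @ [(E1, -1)]) (Y, 0) (E2, -1) []),
    (?sy * ?sf, mono (u @ [(E1, -1), (E2, -1), (Y, 0)])),
    (?sy, mono (u @ [(E1, -1), (zmat, -1)])),
    (1, mat_comb_rel n u ?c E2 0 E2 (-1) [(E2, -1)]),
    (?c / 2, commutator_rel n u (E2, -1) (E2, -1) []),
    (?c / 2, mono (u @ [(zmat, -2)]))]"
  show ?thesis
  proof (rule Jid_lincomb[where gs = ?gs])
    have "mono ((u @ [(E1, -1), (E2, -1)]) @ [(Y, 0)]) \<in> Jid n"
      by (rule Jid_annihilate) (use vu vY valid_E1 valid_E2 in auto)
    moreover have "mono ((u @ [(E1, -1)]) @ [(zmat, -1)]) \<in> Jid n"
      by (rule Jid_zmat) (use vu valid_E1 in auto)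
    ultimately show "\<forall>g\<in>set ?gs. snd g \<in> Jid n"
      using vu vY valid_E1 valid_E2
      by (auto intro!: commutator_rel_Jid mat_comb_rel_Jid Jid_zmat)
    show "mono (u @ (Y, 0) # chi) v = (\<Sum>g\<leftarrow>?gs. fst g * snd g v)" for v
      unfolding commutator_rel_def mat_comb_rel_def lbracket_def lcentral_def lsign_def fst_conv snd_conv
        YE1 YE2 E2E2 sE2
      by (simp add: fsub_def fscale_def field_simps)
  qed
qed

lemma first_column_sign_cancel:
  assumes vY: "valid n Y"
  shows "(1 + sgn n Y E1) * Y (2*n-1) 1 = 0" "(sgn n (sbr n Y E1) E2 + sgn n Y E1) * Y (2*n) 1 = 0"
proof -
  let ?Z = "sbr n Y E1"
  show "(1 + sgn n Y E1) * Y (2*n-1) 1 = 0"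
    using sgn_odd_E first_column_if_even[OF vY] by (cases "is_odd_mat n Y") auto
  have Z: "?Z (2*n) (2*n-1) = Y (2*n) 1" unfolding sbr_E1 using indices by simp
  show "(sgn n ?Z E2 + sgn n Y E1) * Y (2*n) 1 = 0"
  proof (cases "is_odd_mat n Y \<and> ?Z \<noteq> zmat")
    case True
    then have "\<not> is_odd_mat n ?Z"
      using is_odd_mat_eq_parity[OF has_parity_sbr[OF vY valid_E1]] is_odd_E1 by simp
    then have "sgn n ?Z E2 = 1" by (simp add: sgn_def)
    then show ?thesis using True sgn_odd_E(1) by simp
  next
    case False
    then consider "\<not> is_odd_mat n Y" | "?Z = zmat" by blast
    then have "Y (2*n) 1 = 0"
      by cases (use first_column_if_even[OF vY] Z in \<open>auto simp: zmat_def\<close>)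
    then show ?thesis by simp
  qed
qed

lemma pos_mode_remainder_Jid:
  assumes vY: "valid n Y" and m1: "1 \<le> m" and vu: "validw n u"
  shows "(\<lambda>v. mono (u @ [lbracket n (lbracket n (Y, m) (E1, -1)) (E2, -1)]) v
      + lcentral n (lbracket n (Y, m) (E1, -1)) (E2, -1) * mono u v
      + lcentral n (Y, m) (E1, -1) * mono (u @ [(E2, -1)]) v
      + lsign n (Y, m) (E1, -1) * lcentral n (Y, m) (E2, -1) * mono (u @ [(E1, -1)]) v) \<in> Jid n"
    (is "?rem \<in> Jid n")
proof -
  define Z where "Z = sbr n Y E1"
  let ?sy = "sgn n Y E1" and ?sz = "sgn n Z E2"
  have vZ: "valid n Z" unfolding Z_def using valid_sbr vY valid_E1 by auto
  have ZE2: "lbracket n (lbracket n (Y, m) (E1, -1)) (E2, -1) = (sbr n Z E2, m - 2)"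
    by (simp add: lbracket_def Z_def)
  show ?thesis
  proof (cases "m = 1")
    case True
    let ?A = "Y (2*n-1) 1" and ?B = "Y (2*n) 1"
    have Z1: "Z i 1 = - ?sy * (if i = 1 then ?A else 0)" and Z2: "Z (2*n) j = (if j = 2*n-1 then ?B else 0)" for i j
      unfolding Z_def sbr_E1 using indices by auto
    have ZE2_comb: "sbr n Z E2 = mat_comb (- ?sz * ?B) E1 (- ?sy * ?A) E2"
      unfolding sbr_E2 using Z1 Z2 indices by (auto simp: fun_eq_iff mat_comb_def Emat_def)
    have kA: "(1 + ?sy) * ?A = 0" and kB: "(?sz + ?sy) * ?B = 0"
      using first_column_sign_cancel[OF vY] unfolding Z_def by simp_all
    have "lcentral n (lbracket n (Y, m) (E1, -1)) (E2, -1) = 0"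
      "lcentral n (Y, m) (E1, -1) = - ?A" "lcentral n (Y, m) (E2, -1) = - ?B"
      "lsign n (Y, m) (E1, -1) = ?sy"
      using True str_mmul_E1 str_mmul_E2 by (simp_all add: lcentral_def lbracket_def lsign_def)
    then have "?rem = (\<lambda>v. mat_comb_rel n u (- ?sz * ?B) E1 (- ?sy * ?A) E2 (-1) [] v
        - (1 + ?sy) * ?A * mono (u @ [(E2, -1)]) v - (?sz + ?sy) * ?B * mono (u @ [(E1, -1)]) v)"
      unfolding ZE2 ZE2_comb using True by (simp add: mat_comb_rel_def fsub_def fscale_def fun_eq_iff algebra_simps)
    also have "\<dots> = mat_comb_rel n u (- ?sz * ?B) E1 (- ?sy * ?A) E2 (-1) []"
      unfolding kA kB by simp
    finally show ?thesis
      using mat_comb_rel_Jid[OF vu validw_Nil valid_E1 valid_E2] is_odd_E1 is_odd_E2 by simp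
  next
    case False
    then have m2: "2 \<le> m" using m1 by simp
    have "lcentral n (lbracket n (Y, m) (E1, -1)) (E2, -1) = 0"
    proof (cases "m = 2")
      case True
      have "Z (2*n) 1 = 0" unfolding Z_def sbr_E1 using indices by simp
      then have "str n (mmul n Z E2) = 0"
        unfolding mmul_Emat_right[OF order_refl indices(6)] str_single_column[OF indices(6) order_refl] by simp
      then show ?thesis by (simp add: lcentral_def lbracket_def Z_def)
    qed (use m2 in \<open>simp add: lcentral_def lbracket_def\<close>)
    moreover have "lcentral n (Y, m) (E1, -1) = 0" "lcentral n (Y, m) (E2, -1) = 0"
      using m2 by (simp_all add: lcentral_def)
    moreover have "mono (u @ [(sbr n Z E2, m - 2)]) \<in> Jid n"
      by (rule Jid_annihilate[OF vu valid_sbr[OF vZ valid_E2]]) (use m2 in simp)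
    ultimately show ?thesis unfolding ZE2 by (simp add: fun_eq_iff[symmetric])
  qed
qed

lemma pos_mode_chi_Jid:
  assumes vY: "valid n Y" and m1: "1 \<le> m" and vu: "validw n u"
  shows "mono (u @ (Y, m) # chi) \<in> Jid n"
proof -
  define \<zeta> where "\<zeta> = lbracket n (Y, m) (E1, -1)"
  define \<omega> where "\<omega> = lbracket n (Y, m) (E2, -1)"
  let ?sy = "lsign n (Y, m) (E1, -1)"
  let ?gs = "[(1, commutator_rel n u (Y, m) (E1, -1) [(E2, -1)]),
    (?sy, commutator_rel n (u @ [(E1, -1)]) (Y, m) (E2, -1) []),
    (?sy * lsign n (Y, m) (E2, -1), mono (u @ [(E1, -1), (E2, -1), (Y, m)])),
    (?sy, mono (u @ [(E1, -1), \<omega>])),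
    (1, commutator_rel n u \<zeta> (E2, -1) []),
    (lsign n \<zeta> (E2, -1), mono (u @ [(E2, -1), \<zeta>])),
    (1, \<lambda>v. mono (u @ [lbracket n \<zeta> (E2, -1)]) v + lcentral n \<zeta> (E2, -1) * mono u v
      + lcentral n (Y, m) (E1, -1) * mono (u @ [(E2, -1)]) v
      + ?sy * lcentral n (Y, m) (E2, -1) * mono (u @ [(E1, -1)]) v)]"
  have v\<zeta>: "valid n (fst \<zeta>)" and v\<omega>: "valid n (fst \<omega>)"
    unfolding \<zeta>_def \<omega>_def using vY valid_E1 valid_E2 by (simp_all add: valid_lbracket)
  have "mono ((u @ [(E1, -1), (E2, -1)]) @ [(Y, m)]) \<in> Jid n"
    by (rule Jid_annihilate) (use vu vY valid_E1 valid_E2 m1 in auto)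
  moreover have "mono ((u @ [(E1, -1)]) @ [\<omega>]) \<in> Jid n"
    using Jid_annihilate[of n "u @ [(E1, -1)]" "fst \<omega>" "snd \<omega>"] vu valid_E1 v\<omega> m1
    by (simp add: \<omega>_def lbracket_def)
  moreover have "mono ((u @ [(E2, -1)]) @ [\<zeta>]) \<in> Jid n"
    using Jid_annihilate[of n "u @ [(E2, -1)]" "fst \<zeta>" "snd \<zeta>"] vu valid_E2 v\<zeta> m1
    by (simp add: \<zeta>_def lbracket_def)
  moreover note pos_mode_remainder_Jid[OF vY m1 vu, folded \<zeta>_def]
  ultimately show ?thesis
  proof (intro Jid_lincomb[where gs = ?gs])
    show "mono (u @ (Y, m) # chi) v = (\<Sum>g\<leftarrow>?gs. fst g * snd g v)" for v
      unfolding commutator_rel_def \<zeta>_def[symmetric] \<omega>_def[symmetric]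
      by (simp add: fsub_def fscale_def algebra_simps)
  qed (use vu vY valid_E1 valid_E2 v\<zeta> in \<open>auto intro!: commutator_rel_Jid\<close>)
qed

end

lemma valid_even_part: "sl n X \<Longrightarrow> valid n (even_part n X)"
  by (rule validI[of n _ False])
     (auto simp: sl_def is_mat_def even_part_def has_parity_def str_def odd_entry_def split: if_splits)

lemma valid_odd_part: "sl n X \<Longrightarrow> valid n (odd_part n X)"
  by (rule validI[of n _ True])
     (auto simp: sl_def is_mat_def odd_part_def has_parity_def str_def odd_entry_def split: if_splits)

lemma strictly_upper_even_part: "strictly_upper n X \<Longrightarrow> strictly_upper n (even_part n X)"
  and strictly_upper_odd_part: "strictly_upper n X \<Longrightarrow> strictly_upper n (odd_part n X)"
  by (auto simp: strictly_upper_def is_mat_def even_part_def odd_part_def split: if_splits)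

lemma fmul_mode_mono:
  "fmul (mode n X m) (mono w) = fadd (mono ((even_part n X, m) # w)) (mono ((odd_part n X, m) # w))"
  by (simp add: mode_def fmul_fadd_left fmul_mono_mono)

definition trivial_act :: "letter \<Rightarrow> state \<Rightarrow> state" where
  "trivial_act x r = (\<lambda>i. 0)"

definition read_slot :: "nat \<Rightarrow> state \<Rightarrow> complex" where
  "read_slot k r = r k"

definition unit_state :: state where
  "unit_state = (\<lambda>i. if i = 0 then 1 else 0)"

text \<open>A mode \<open>X\<^sub>(\<^sub>-\<^sub>1\<^sub>)\<close> is projected to \<open>X 1 (2n-1) E1 + X 1 (2n) E2\<close> and multiplied into the
  exterior algebra on \<open>E1, E2\<close>, with slots \<open>0, 1, 2, 3\<close> holding the coefficients of
  \<open>1, E1, E2, E1 \<and> E2\<close>; all other modes act by zero.\<close>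

definition chi_act :: "nat \<Rightarrow> letter \<Rightarrow> state \<Rightarrow> state" where
  "chi_act n x r = (if snd x = -1 then
     (\<lambda>i. if i = 1 then fst x 1 (2*n-1) * r 0 else if i = 2 then fst x 1 (2*n) * r 0
       else if i = 3 then fst x 1 (2*n) * r 1 - fst x 1 (2*n-1) * r 2 else 0)
   else (\<lambda>i. 0))"

lemma neg_mode_rep_trivial: "0 < n \<Longrightarrow> neg_mode_rep n trivial_act (read_slot k)"
  by standard (auto simp: trivial_act_def read_slot_def)

context psl_rank_ge2
begin

text \<open>With trivial action, \<open>eval_word\<close> reads off the coefficient of the vacuum.\<close>

sublocale vac: neg_mode_rep n trivial_act "read_slot 0"
  by (rule neg_mode_rep_trivial) (use n_ge2 in simp)

sublocale chi_coeff: neg_mode_rep n "chi_act n" "read_slot 3"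
proof
  show "0 < n" using n_ge2 by simp
  show "chi_act n (idm n, m) r = (\<lambda>i. 0)" for m r
    using n_ge2 by (auto simp: chi_act_def idm_def fun_eq_iff)
  fix X Y :: smat and m l :: int and r
  assume vX: "valid n X" and vY: "valid n Y" and "m < 0" "l < 0"
  then have "chi_act n (sbr n X Y, m + l) r = (\<lambda>i. 0)" by (simp add: chi_act_def)
  moreover have "sgn n X Y = -1 \<or> (X 1 (2*n-1) = 0 \<and> X 1 (2*n) = 0) \<or> (Y 1 (2*n-1) = 0 \<and> Y 1 (2*n) = 0)"
  proof -
    have "odd_entry n 1 (2*n-1)" "odd_entry n 1 (2*n)" using indices by (auto simp: odd_entry_def)
    then show ?thesis using has_parity_valid[OF vX] has_parity_valid[OF vY]
      by (auto simp: sgn_def has_parity_def)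
  qed
  ultimately show "chi_act n (Y, l) (chi_act n (X, m) r)
      = (\<lambda>i. sgn n X Y * chi_act n (X, m) (chi_act n (Y, l) r) i + chi_act n (sbr n X Y, m + l) r i)"
    by (auto simp: chi_act_def fun_eq_iff algebra_simps)
qed (auto simp: chi_act_def read_slot_def mat_comb_def fun_eq_iff algebra_simps)

lemma chi_coeff_chi: "chi_coeff.\<Phi> unit_state chi = 1"
  using indices by (simp add: chi_act_def read_slot_def unit_state_def Emat_def)

lemma vac_neg: "snd x < 0 \<Longrightarrow> vac.\<Phi> r (x # w) = 0"
  using vac.eval_zero_state by (simp add: trivial_act_def)

lemma vac_zero_mode:
  "snd x = 0 \<Longrightarrow> valid n (fst x) \<Longrightarrow> validw n w \<Longrightarrow> vac.\<Phi> r (x # w) = 0"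
proof (induction "length w" arbitrary: x w rule: less_induct)
  case less
  have nx: "\<not> snd x < 0" using less.prems by simp
  show ?case
  proof (cases w)
    case Nil then show ?thesis using vac.eval_nonneg[OF nx] by simp
  next
    case (Cons y w')
    have vy: "valid n (fst y)" and vw': "validw n w'" using less.prems Cons by auto
    have "lcentral n x y = 0" "lcentral n y x = 0" using less.prems by (simp_all add: lcentral_def)
    show ?thesis
    proof (cases "snd y < 0")
      case True
      have "vac.\<Phi> r (lbracket n x y # w') = 0" using True less.prems by (intro vac_neg) (simp add: lbracket_def)
      moreover have "wsum (\<lambda>v. vac.\<Phi> r (y # v)) (commute_through n x w') = 0"
        using vac_neg[OF True] by simp
      ultimately show ?thesis
        unfolding Cons vac.eval_nonneg[OF nx] wsum_commute_through_Cons using \<open>lcentral n x y = 0\<close> by simp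
    next
      case False
      have "wsum (\<lambda>v. vac.\<Phi> r (x # v)) (commute_through n y w') = wsum (\<lambda>v. 0) (commute_through n y w')"
        by (rule wsum_commute_through_cong[OF vy vw']) (use less Cons in simp)
      then have "vac.\<Phi> r (y # x # w') = - lsign n x y * vac.\<Phi> r (lbracket n x y # w')"
        unfolding vac.eval_nonneg[OF False] wsum_commute_through_Cons
        using vac.eval_lbracket_swap[of "[]" w' x y r] less.prems vy vw' \<open>lcentral n y x = 0\<close> by simp
      then show ?thesis
        using vac.eval_commutator[of "[]" w' x y r] less.prems vy vw' Cons \<open>lcentral n x y = 0\<close> lsign_square[of n x y]
        by (simp add: mult.assoc[symmetric])
    qed
  qed
qed

lemma vac_vanishes_on_Jid: "a \<in> Jid n \<Longrightarrow> lin_ext (vac.\<Phi> r) a = 0"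
  using vac.vanishes_on_eval_Jid by (simp add: vanishes_on_def)

text \<open>Positive modes are commuted through to \<open>chi\<close>, which they annihilate modulo \<open>Jid n\<close>.\<close>

lemma vac_pos_mode_chi:
  assumes x: "valid n (fst x)" "1 \<le> snd x"
    and shorter: "\<And>v. length v \<le> N \<Longrightarrow> validw n v \<Longrightarrow> vac.\<Phi> r (v @ chi) = 0"
  shows "length u + length w \<le> N \<Longrightarrow> validw n u \<Longrightarrow> validw n w \<Longrightarrow> vac.\<Phi> r (u @ x # w @ chi) = 0"
proof (induction w arbitrary: u)
  case Nil
  have "mono (u @ (fst x, snd x) # chi) \<in> Jid n" by (rule pos_mode_chi_Jid) (use x Nil in auto)
  then show ?case using vac_vanishes_on_Jid by (fastforce simp: lin_ext_mono)
next
  case (Cons y w)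
  have vy: "valid n (fst y)" and vw: "validw n w" using Cons.prems by auto
  have "vac.\<Phi> r (u @ x # y # (w @ chi)) - lsign n x y * vac.\<Phi> r (u @ y # x # (w @ chi))
      = vac.\<Phi> r (u @ lbracket n x y # (w @ chi)) + lcentral n x y * vac.\<Phi> r (u @ (w @ chi))"
    by (rule vac.eval_commutator) (use Cons.prems x vy vw validw_chi in auto)
  moreover have "vac.\<Phi> r (u @ y # x # w @ chi) = 0"
    using Cons.IH[of "u @ [y]"] Cons.prems vy vw by simp
  moreover have "vac.\<Phi> r ((u @ lbracket n x y # w) @ chi) = 0" "vac.\<Phi> r ((u @ w) @ chi) = 0"
    using shorter[of "u @ lbracket n x y # w"] shorter[of "u @ w"] Cons.prems x vy vw
    by (simp_all add: valid_lbracket)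
  ultimately show ?case by simp
qed

lemma vac_chi: "validw n w \<Longrightarrow> vac.\<Phi> r (w @ chi) = 0"
proof (induction "length w" arbitrary: w rule: less_induct)
  case less
  show ?case
  proof (cases w)
    case Nil then show ?thesis by (simp add: trivial_act_def vac.eval_zero_state)
  next
    case (Cons x w')
    have vx: "valid n (fst x)" and vw': "validw n w'" using less.prems Cons by auto
    consider "snd x < 0" | "snd x = 0" | "1 \<le> snd x" by linarith
    then show ?thesis
    proof cases
      case 1 then show ?thesis using vac_neg Cons by simp
    next
      case 2 then show ?thesis using vac_zero_mode vx vw' validw_chi Cons by simp
    next
      case 3
      have "vac.\<Phi> r ([] @ x # w' @ chi) = 0"
        by (rule vac_pos_mode_chi[OF vx 3, where N = "length w'"]) (use less.hyps Cons vw' in auto)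
      then show ?thesis using Cons by simp
    qed
  qed
qed

lemma singular_zero_mode: "sl n X \<Longrightarrow> strictly_upper n X \<Longrightarrow> fmul (mode n X 0) (mono chi) \<in> Jid n"
  unfolding fmul_mode_mono
  by (intro Jid.add zero_mode_chi_Jid[where u = "[]", unfolded append_Nil] valid_even_part valid_odd_part
      strictly_upper_even_part strictly_upper_odd_part validw_Nil)

lemma singular_pos_mode: "sl n X \<Longrightarrow> 1 \<le> m \<Longrightarrow> fmul (mode n X m) (mono chi) \<in> Jid n"
  unfolding fmul_mode_mono
  by (intro Jid.add pos_mode_chi_Jid[where u = "[]", unfolded append_Nil] valid_even_part valid_odd_part
      validw_Nil)

lemma chi_notin_Jid: "mono chi \<notin> Jid n"
  using chi_coeff.vanishes_on_eval_Jid[of "mono chi" unit_state] chi_coeff_chi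
  by (auto simp: vanishes_on_def lin_ext_mono)

lemma vacuum_notin_submodule:
  assumes "inA n a"
  shows "fsub (fmul a (mono chi)) (mono []) \<notin> Jid n"
proof
  assume J: "fsub (fmul a (mono chi)) (mono []) \<in> Jid n"
  have fin: "finite {u. a u \<noteq> 0}" and valid: "\<And>u. a u \<noteq> 0 \<Longrightarrow> validw n u"
    using assms by (auto simp: inA_def)
  have "lin_ext (vac.\<Phi> unit_state) (fmul a (mono chi)) = 0"
    unfolding lin_ext_fmul_mono[OF fin] by (rule sum.neutral) (use vac_chi valid in auto)
  then have "lin_ext (vac.\<Phi> unit_state) (fsub (fmul a (mono chi)) (mono [])) = -1"
    by (simp add: lin_ext_fsub[OF finite_support_fmul_mono[OF fin] finite_support_mono] lin_ext_mono
        read_slot_def unit_state_def)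
  then show False using vac_vanishes_on_Jid[OF J] by simp
qed

end

lemma inA_mono_Nil: "inA n (mono [])"
  using finite_support_mono[of "[]"] by (auto simp: inA_def mono_def)

theorem mainTheorem2:
  fixes n :: nat
  assumes "2 \<le> n"
  shows "(\<forall>X. sl n X \<and> strictly_upper n X \<longrightarrow>
            fmul (mode n X 0) (mono [(Emat 1 (2*n-1), -1), (Emat 1 (2*n), -1)]) \<in> Jid n)
       \<and> (\<forall>X (m::int). sl n X \<and> 1 \<le> m \<longrightarrow>
            fmul (mode n X m) (mono [(Emat 1 (2*n-1), -1), (Emat 1 (2*n), -1)]) \<in> Jid n)
       \<and> mono [(Emat 1 (2*n-1), -1), (Emat 1 (2*n), -1)] \<notin> Jid n
       \<and> (\<exists>v. inA n v \<and> (\<forall>a. inA n a \<longrightarrow>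
            fsub (fmul a (mono [(Emat 1 (2*n-1), -1), (Emat 1 (2*n), -1)])) v \<notin> Jid n))"
proof -
  interpret psl_rank_ge2 n by standard (rule assms)
  show ?thesis
    using singular_zero_mode singular_pos_mode chi_notin_Jid vacuum_notin_submodule inA_mono_Nil by blast
qed

end
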